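(* Let $\Omega\subseteq\mathbb{R}^{d+1}$ be an $L_0$-Lipschitz graph domain. There exists $\delta_0=\delta_0(L_0,d)>0$ such that if $0<\delta<\delta_0$ and $\varphi:\overline{\Omega}\to\varphi(\overline{\Omega})$ is a $(1+\delta)$-bi-Lipschitz $C^1$ map satisfying $|D\varphi(z)-I|\le\delta$ for all $z\in\overline{\Omega}$, then there exists $L_1$ depending only on $L_0$ and $d$ such that $\varphi(\Omega)$ is an $L_1$-Lipschitz graph domain.
   Context: An open connected set $\Omega'\subseteq\mathbb{R}^{d+1}$ is an $M$-Lipschitz graph domain if there is a composition $A$ of a translation, a dilation and a rotation and a function $r:\mathbb{S}^d\to(0,\infty)$ such that $\partial A(\Omega')=\{r(\theta)\theta:\theta\in\mathbb{S}^d\}$, $|r(\theta)-r(\psi)|\le M|\theta-\psi|$ for all $\theta,\psi\in\mathbb{S}^d$, and $\frac{1}{1+M}\le r(\theta)\le1$. $|\cdot|$ on matrices is the operator norm; $I$ is the identity. *)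

theory Defs
  imports "HOL-Analysis.Analysis"
begin

definition rotation :: "(real^'n \<Rightarrow> real^'n) \<Rightarrow> bool" where
  "rotation R \<longleftrightarrow> orthogonal_transformation R \<and> det (matrix R) = 1"

definition transl_dil_rot :: "(real^'n \<Rightarrow> real^'n) \<Rightarrow> bool" where
  "transl_dil_rot A \<longleftrightarrow>
     (\<exists>b c R. c > 0 \<and> rotation R \<and> A = (\<lambda>x. x + b) \<circ> (\<lambda>x. c *\<^sub>R x) \<circ> R)"

text \<open>M-Lipschitz graph domain; the unit sphere S^d is sphere 0 1 in real^'n, CARD('n) = d+1.\<close>
definition lipschitz_graph_domain :: "real \<Rightarrow> (real^'n) set \<Rightarrow> bool" where
  "lipschitz_graph_domain M \<Omega> \<longleftrightarrow> open \<Omega> \<and> connected \<Omega> \<and>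
     (\<exists>A r. transl_dil_rot A \<and>
        (\<forall>\<theta>\<in>sphere 0 1. r \<theta> > 0) \<and>
        frontier (A ` \<Omega>) = (\<lambda>\<theta>. r \<theta> *\<^sub>R \<theta>) ` sphere 0 1 \<and>
        (\<forall>\<theta>\<in>sphere 0 1. \<forall>\<psi>\<in>sphere 0 1. \<bar>r \<theta> - r \<psi>\<bar> \<le> M * norm (\<theta> - \<psi>)) \<and>
        (\<forall>\<theta>\<in>sphere 0 1. 1 / (1 + M) \<le> r \<theta> \<and> r \<theta> \<le> 1))"

definition bi_lipschitz_on :: "real \<Rightarrow> 'a::metric_space set \<Rightarrow> ('a \<Rightarrow> 'b::metric_space) \<Rightarrow> bool" where
  "bi_lipschitz_on K S f \<longleftrightarrow>
     (\<forall>x\<in>S. \<forall>y\<in>S. dist x y / K \<le> dist (f x) (f y) \<and> dist (f x) (f y) \<le> K * dist x y)"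

end

theory Submission
  imports Defs
begin

text \<open>After a similarity, \<open>\<Omega>\<close> is bounded by the radial graph \<open>\<Gamma> = {r(\<theta>) \<theta>}\<close>, so it is the
  region under \<open>\<Gamma>\<close> or, in dimension at least 2, the region over it. Two points \<open>x, y\<close> of \<open>\<Gamma>\<close>
  are joined inside the closure by a polygon of length \<open>O(|x - y|)\<close>: radially by the factor
  \<open>1 \<mp> C |x - y|\<close> and then along the rescaled chord. As \<open>|D\<phi> - I| \<le> \<delta>\<close>, the displacement
  \<open>\<phi> - id\<close> is therefore \<open>O(\<delta>)\<close>-Lipschitz and \<open>O(\<delta>)\<close>-small on \<open>\<Gamma>\<close>. Because \<open>\<Gamma>\<close> is
  transversal to rays, the direction of \<open>\<phi>(x)\<close> seen from a suitable centre then separates the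
  points of \<open>\<Gamma>\<close> at a Lipschitz rate, and every ray from the centre meets
  \<open>\<phi>(\<Gamma>) = \<partial>\<phi>(\<Omega>)\<close> by connectedness. So \<open>\<partial>\<phi>(\<Omega>)\<close> is again a radial graph with
  Lipschitz radius.\<close>

lemma sgn_in_sphere: "(p::'a::real_normed_vector) \<noteq> 0 \<Longrightarrow> sgn p \<in> sphere 0 1"
  by (simp add: norm_sgn)

lemma norm_sgn_diff_le:
  fixes p x :: "'a::real_normed_vector"
  assumes "x \<noteq> 0"
  shows "norm (sgn p - sgn x) \<le> 2 * norm (p - x) / norm x"
proof (cases "p = 0")
  case True
  then show ?thesis using assms by (simp add: norm_sgn)
next
  case False
  have "sgn p - sgn x = (p - x) /\<^sub>R norm x + (inverse (norm p) - inverse (norm x)) *\<^sub>R p"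
    using False assms by (simp add: sgn_div_norm algebra_simps)
  then have "norm (sgn p - sgn x) \<le> norm ((p - x) /\<^sub>R norm x) + norm ((inverse (norm p) - inverse (norm x)) *\<^sub>R p)"
    by (metis norm_triangle_ineq)
  also have "norm ((p - x) /\<^sub>R norm x) = norm (p - x) / norm x"
    unfolding norm_scaleR by (simp add: field_simps)
  also have "norm ((inverse (norm p) - inverse (norm x)) *\<^sub>R p) = \<bar>norm x - norm p\<bar> / norm x"
    using False assms by (simp add: field_simps abs_mult abs_div)
  also have "\<bar>norm x - norm p\<bar> \<le> norm (p - x)"
    by (metis norm_minus_commute norm_triangle_ineq3)
  finally show ?thesis using assms by (simp add: divide_right_mono add_divide_distrib[symmetric])
qed

lemma sgn_diff_eq:
  fixes u v :: "'a::real_normed_vector"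
  assumes "u \<noteq> 0" "v \<noteq> 0"
  shows "sgn u - sgn v = (1 / norm u) *\<^sub>R (u - (norm u / norm v) *\<^sub>R v)"
  using assms by (simp add: sgn_div_norm algebra_simps divide_inverse)

lemma abs_1_minus_norm_ratio_le:
  fixes u v :: "'a::real_normed_vector"
  assumes "v \<noteq> 0"
  shows "\<bar>1 - norm u / norm v\<bar> \<le> norm (u - v) / norm v"
proof -
  have "\<bar>1 - norm u / norm v\<bar> = \<bar>norm v - norm u\<bar> / norm v" using assms by (simp add: field_simps)
  also have "\<dots> \<le> norm (u - v) / norm v"
    using norm_triangle_ineq3[of v u] by (simp add: divide_right_mono norm_minus_commute)
  finally show ?thesis .
qed

lemma norm_blinfun_diff_id_le:
  assumes "norm (T - id_blinfun) \<le> \<delta>"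
  shows "norm (blinfun_apply T k - k) \<le> \<delta> * norm k"
proof -
  have "norm (blinfun_apply T k - k) = norm (blinfun_apply (T - id_blinfun) k)"
    by (simp add: blinfun.diff_left)
  also have "\<dots> \<le> norm (T - id_blinfun) * norm k" by (rule norm_blinfun)
  also have "\<dots> \<le> \<delta> * norm k" using assms by (intro mult_right_mono) auto
  finally show ?thesis .
qed

lemma norm_scaleR_diff_units_sq:
  fixes \<theta> \<psi> :: "'a::real_inner"
  assumes "norm \<theta> = 1" "norm \<psi> = 1"
  shows "(norm (a *\<^sub>R \<theta> - u *\<^sub>R \<psi>))\<^sup>2 = (a - u)\<^sup>2 + a * u * (norm (\<theta> - \<psi>))\<^sup>2"
proof -
  have "\<theta> \<bullet> \<theta> = 1" "\<psi> \<bullet> \<psi> = 1"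
    using assms by (simp_all add: power2_norm_eq_inner[symmetric])
  then show ?thesis
    unfolding power2_norm_eq_inner
    by (simp add: inner_diff_left inner_diff_right inner_commute power2_eq_square algebra_simps)
qed

lemma exists_unit_nonneg_inner_both:
  fixes \<theta> \<psi> :: "'a::euclidean_space"
  assumes "2 \<le> DIM('a)" "norm \<theta> = 1" "norm \<psi> = 1"
  shows "\<exists>\<omega>. norm \<omega> = 1 \<and> \<theta> \<bullet> \<omega> \<ge> 0 \<and> \<psi> \<bullet> \<omega> \<ge> 0"
proof (cases "\<theta> + \<psi> = 0")
  case True
  have "dim {\<theta>} < DIM('a)"
    using assms(1) dim_le_card'[of "{\<theta>}"] by simp
  then obtain w :: 'a where "w \<noteq> 0" "span {\<theta>} \<subseteq> {x. w \<bullet> x = 0}"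
    using lowdim_subset_hyperplane by blast
  then have "w \<noteq> 0" "\<theta> \<bullet> w = 0"
    using span_base[of \<theta> "{\<theta>}"] by (auto simp: inner_commute)
  moreover have "\<psi> = - \<theta>" using True by (simp add: add_eq_0_iff2)
  ultimately show ?thesis
    by (intro exI[of _ "sgn w"]) (simp add: norm_sgn sgn_div_norm)
next
  case False
  have "\<theta> \<bullet> \<theta> = 1" "\<psi> \<bullet> \<psi> = 1"
    using assms by (simp_all add: power2_norm_eq_inner[symmetric])
  moreover have "\<bar>\<theta> \<bullet> \<psi>\<bar> \<le> 1" using Cauchy_Schwarz_ineq2[of \<theta> \<psi>] assms by simp
  ultimately have "\<theta> \<bullet> (\<theta> + \<psi>) \<ge> 0" "\<psi> \<bullet> (\<theta> + \<psi>) \<ge> 0"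
    by (auto simp: inner_add_right inner_commute)
  then show ?thesis using False
    by (intro exI[of _ "sgn (\<theta> + \<psi>)"]) (auto simp: norm_sgn sgn_div_norm)
qed

lemma norm_ge_1_on_segment_scaled_units:
  fixes \<theta> \<psi> :: "'a::real_inner"
  assumes "norm \<theta> = 1" "norm \<psi> = 1" "\<theta> \<bullet> \<psi> \<ge> 0" and z: "z \<in> closed_segment (3 *\<^sub>R \<theta>) (3 *\<^sub>R \<psi>)"
  shows "1 \<le> norm z"
proof -
  obtain u where u: "0 \<le> u" "u \<le> 1" "z = (1 - u) *\<^sub>R (3 *\<^sub>R \<theta>) + u *\<^sub>R (3 *\<^sub>R \<psi>)"
    using z by (auto simp: closed_segment_def)
  have "\<theta> \<bullet> \<theta> = 1" "\<psi> \<bullet> \<psi> = 1"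
    using assms by (simp_all add: power2_norm_eq_inner[symmetric])
  then have "(norm z)\<^sup>2 = 9 * ((1-u)\<^sup>2 + u\<^sup>2 + 2*u*(1-u)*(\<theta> \<bullet> \<psi>))"
    unfolding power2_norm_eq_inner u(3)
    by (simp add: inner_add_left inner_add_right inner_commute power2_eq_square algebra_simps)
  also have "\<dots> \<ge> 9 * ((1-u)\<^sup>2 + u\<^sup>2)"
    using assms u by (simp add: mult_nonneg_nonneg)
  also have "9 * ((1-u)\<^sup>2 + u\<^sup>2) \<ge> 1"
    using zero_le_power2[of "2*u - 1"] by (simp add: power2_eq_square algebra_simps)
  finally show ?thesis by (intro power2_le_imp_le[of 1]) simp_all
qed

lemma
  fixes h k :: "'a::real_normed_vector \<Rightarrow> 'a"
  assumes ch: "continuous_on UNIV h" and ck: "continuous_on UNIV k"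
    and kh: "\<And>x. k (h x) = x" and hk: "\<And>y. h (k y) = y"
  shows closure_image_bicontinuous: "closure (h ` S) = h ` closure S"
    and frontier_image_bicontinuous: "frontier (h ` S) = h ` frontier S"
    and open_image_bicontinuous: "open S \<Longrightarrow> open (h ` S)"
proof -
  have img: "h ` T = k -` T" for T
  proof
    show "h ` T \<subseteq> k -` T" using kh by auto
    show "k -` T \<subseteq> h ` T" using hk by (metis image_eqI subsetI vimageE)
  qed
  have ck': "\<And>x. continuous (at x) k" using ck continuous_on_eq_continuous_at[of UNIV k] by simp
  have cl: "closure (h ` T) = h ` closure T" for T
  proof
    show "closure (h ` T) \<subseteq> h ` closure T"
      unfolding img by (rule closure_minimal) (use ck' closure_subset in \<open>auto intro!: continuous_closed_vimage\<close>)
    show "h ` closure T \<subseteq> closure (h ` T)"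
      by (rule image_closure_subset[OF continuous_on_subset[OF ch] closed_closure closure_subset]) simp
  qed
  then show "closure (h ` S) = h ` closure S" .
  have bij: "bij h" using kh hk by (metis bijI')
  have inj: "inj h" using kh by (metis injI)
  show "frontier (h ` S) = h ` frontier S"
    unfolding frontier_closures
    by (simp add: cl bij_image_Compl_eq[OF bij, symmetric] image_Int[OF inj])
  show "open S \<Longrightarrow> open (h ` S)"
    unfolding img by (rule continuous_open_vimage) (use ck' in auto)
qed

lemma closed_image_inverse_lipschitz:
  fixes f :: "'a::complete_space \<Rightarrow> 'b::metric_space"
  assumes "closed S" "continuous_on S f" "0 < K"
    and inv_lip: "\<And>x y. x \<in> S \<Longrightarrow> y \<in> S \<Longrightarrow> dist x y \<le> K * dist (f x) (f y)"
  shows "closed (f ` S)"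
  unfolding closed_sequential_limits
proof (intro allI impI, elim conjE)
  fix X l assume X: "\<forall>n. X n \<in> f ` S" and lim: "X \<longlonglongrightarrow> l"
  then have "\<forall>n. \<exists>y. y \<in> S \<and> X n = f y" by blast
  then obtain z where z: "\<And>n. z n \<in> S" "\<And>n. X n = f (z n)" by metis
  have "Cauchy z"
    unfolding Cauchy_def
  proof (intro allI impI)
    fix \<epsilon> :: real assume "\<epsilon> > 0"
    then obtain M where M: "\<forall>m\<ge>M. \<forall>n\<ge>M. dist (X m) (X n) < \<epsilon> / K"
      using LIMSEQ_imp_Cauchy[OF lim] \<open>0 < K\<close> unfolding Cauchy_def by (meson divide_pos_pos)
    show "\<exists>M. \<forall>m\<ge>M. \<forall>n\<ge>M. dist (z m) (z n) < \<epsilon>"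
    proof (intro exI allI impI)
      fix m n assume "m \<ge> M" "n \<ge> M"
      then have "K * dist (X m) (X n) < \<epsilon>" using M \<open>0 < K\<close> by (simp add: field_simps)
      moreover have "dist (z m) (z n) \<le> K * dist (X m) (X n)" using inv_lip z by simp
      ultimately show "dist (z m) (z n) < \<epsilon>" by linarith
    qed
  qed
  then obtain z0 where z0: "z \<longlonglongrightarrow> z0" using Cauchy_convergent_iff convergent_def by blast
  have z0S: "z0 \<in> S" using closed_sequentially[OF assms(1) _ z0] z(1) by blast
  have "(\<lambda>n. f (z n)) \<longlonglongrightarrow> f z0"
    by (rule continuous_on_tendsto_compose[OF assms(2) z0 z0S]) (use z in auto)
  moreover have "X = (\<lambda>n. f (z n))" using z(2) by auto
  ultimately have "l = f z0" using lim LIMSEQ_unique by blast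
  then show "l \<in> f ` S" using z0S by blast
qed

section \<open>Radial graphs\<close>

locale radial_graph =
  fixes r :: "'a::euclidean_space \<Rightarrow> real" and L :: real
  assumes L_nonneg: "L \<ge> 0"
    and r_bounds: "\<And>\<theta>. \<theta> \<in> sphere 0 1 \<Longrightarrow> 1/(1+L) \<le> r \<theta> \<and> r \<theta> \<le> 1"
    and r_lipschitz: "\<And>\<theta> \<psi>. \<theta> \<in> sphere 0 1 \<Longrightarrow> \<psi> \<in> sphere 0 1 \<Longrightarrow> \<bar>r \<theta> - r \<psi>\<bar> \<le> L * norm (\<theta> - \<psi>)"
begin

definition "\<rho> = 1/(1+L)"
definition "\<Gamma> = (\<lambda>\<theta>. r \<theta> *\<^sub>R \<theta>) ` sphere 0 1"
definition "under_graph = {p. p = 0 \<or> norm p < r (sgn p)}"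
definition "over_graph = {p. p \<noteq> 0 \<and> norm p > r (sgn p)}"
definition "under_graph_cl = {p. p = 0 \<or> norm p \<le> r (sgn p)}"
definition "over_graph_cl = {p. p \<noteq> 0 \<and> norm p \<ge> r (sgn p)}"

lemma rho_pos: "\<rho> > 0" and rho_le_1: "\<rho> \<le> 1"
  using L_nonneg by (auto simp: \<rho>_def)

lemma r_sgn_ge_rho: "p \<noteq> 0 \<Longrightarrow> \<rho> \<le> r (sgn p)" and r_sgn_le_1: "p \<noteq> 0 \<Longrightarrow> r (sgn p) \<le> 1"
  using r_bounds[OF sgn_in_sphere] by (auto simp: \<rho>_def)

lemma r_pos: "\<theta> \<in> sphere 0 1 \<Longrightarrow> r \<theta> > 0"
  using r_bounds[of \<theta>] L_nonneg by (smt (verit) divide_pos_pos)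

lemma mem_Gamma_iff: "p \<in> \<Gamma> \<longleftrightarrow> p \<noteq> 0 \<and> norm p = r (sgn p)"
proof
  assume "p \<in> \<Gamma>"
  then obtain \<theta> where th: "\<theta> \<in> sphere 0 1" "p = r \<theta> *\<^sub>R \<theta>" by (auto simp: \<Gamma>_def)
  moreover have "r \<theta> > 0" using r_pos[OF th(1)] .
  ultimately have "sgn p = \<theta>" by (simp add: sgn_scaleR sgn_div_norm)
  then show "p \<noteq> 0 \<and> norm p = r (sgn p)" using th \<open>r \<theta> > 0\<close> by auto
next
  assume "p \<noteq> 0 \<and> norm p = r (sgn p)"
  then have "p = r (sgn p) *\<^sub>R sgn p" "sgn p \<in> sphere 0 1"
    by (auto simp: sgn_div_norm norm_sgn)
  then show "p \<in> \<Gamma>" unfolding \<Gamma>_def by blast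
qed

lemma norm_Gamma_bounds: "p \<in> \<Gamma> \<Longrightarrow> \<rho> \<le> norm p \<and> norm p \<le> 1"
  using mem_Gamma_iff r_sgn_ge_rho r_sgn_le_1 by auto

lemma Gamma_nonempty: "\<Gamma> \<noteq> {}"
proof -
  obtain b :: 'a where "b \<in> Basis" using nonempty_Basis by blast
  then have "b \<in> sphere 0 1" by simp
  then show ?thesis by (auto simp: \<Gamma>_def)
qed

lemma continuous_on_r: "continuous_on (sphere 0 1) r"
proof -
  have "L-lipschitz_on (sphere 0 1) r"
    using r_lipschitz L_nonneg by (auto simp: lipschitz_on_def dist_real_def dist_norm)
  then show ?thesis by (rule lipschitz_on_continuous_on)
qed

lemma continuous_on_r_sgn: "continuous_on (- {0}) (\<lambda>p. r (sgn p))"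
proof -
  have "continuous_on (-{0::'a}) sgn" by (rule continuous_on_sgn[OF continuous_on_id]) simp
  with continuous_on_r show ?thesis by (rule continuous_on_compose2) (use sgn_in_sphere in blast)
qed

lemma compact_Gamma: "compact \<Gamma>"
  unfolding \<Gamma>_def
  by (intro compact_continuous_image continuous_intros continuous_on_r compact_sphere)

lemma open_over_graph: "open over_graph"
proof -
  have "over_graph = (- {0}) \<inter> (\<lambda>p. norm p - r (sgn p)) -` {0<..}"
    by (auto simp: over_graph_def)
  also have "open \<dots>"
    by (rule continuous_open_preimage) (auto intro!: continuous_intros continuous_on_r_sgn)
  finally show ?thesis .
qed

lemma open_under_graph: "open under_graph"
proof -
  have "under_graph = ball 0 \<rho> \<union> ((- {0}) \<inter> (\<lambda>p. r (sgn p) - norm p) -` {0<..})"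
    using rho_pos r_sgn_ge_rho by (force simp: under_graph_def)
  also have "open \<dots>"
    by (intro open_Un open_ball continuous_open_preimage) (auto intro!: continuous_intros continuous_on_r_sgn)
  finally show ?thesis .
qed

lemma under_over_graph_disjoint: "under_graph \<inter> over_graph = {}"
  and under_over_Gamma_cover: "under_graph \<union> over_graph \<union> \<Gamma> = UNIV"
  and Gamma_disjoint: "under_graph \<inter> \<Gamma> = {}" "over_graph \<inter> \<Gamma> = {}"
  and under_graph_cl_eq: "under_graph_cl = under_graph \<union> \<Gamma>"
  and over_graph_cl_eq: "over_graph_cl = over_graph \<union> \<Gamma>"
  by (auto simp: under_graph_def over_graph_def under_graph_cl_def over_graph_cl_def mem_Gamma_iff)

lemma ball_rho_subset_under_graph: "ball 0 \<rho> \<subseteq> under_graph"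
  using r_sgn_ge_rho by (force simp: under_graph_def)

lemma under_graph_scaleR: "p \<in> under_graph \<Longrightarrow> 0 \<le> s \<Longrightarrow> s \<le> 1 \<Longrightarrow> s *\<^sub>R p \<in> under_graph"
  and under_graph_cl_scaleR: "q \<in> under_graph_cl \<Longrightarrow> 0 \<le> s \<Longrightarrow> s \<le> 1 \<Longrightarrow> s *\<^sub>R q \<in> under_graph_cl"
  using mult_left_le_one_le[of "norm p" s] mult_left_le_one_le[of "norm q" s]
  by (cases "s = 0"; force simp: under_graph_def under_graph_cl_def sgn_scaleR)+

lemma over_graph_cl_scaleR: "p \<in> over_graph_cl \<Longrightarrow> 1 \<le> s \<Longrightarrow> s *\<^sub>R p \<in> over_graph_cl"
  using mult_le_cancel_right1[of "norm p" s]
  by (auto simp: over_graph_cl_def sgn_scaleR intro: order_trans)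

lemma starlike_under_graph: "starlike under_graph"
  unfolding starlike_def
proof (intro bexI ballI)
  show "0 \<in> under_graph" by (simp add: under_graph_def)
  show "closed_segment 0 x \<subseteq> under_graph" if "x \<in> under_graph" for x
    using that by (auto simp: closed_segment_def intro!: under_graph_scaleR)
qed

lemma connected_over_graph:
  assumes "2 \<le> DIM('a)"
  shows "connected over_graph"
proof -
  have "over_graph = (\<lambda>(\<theta>,s). (r \<theta> + s) *\<^sub>R \<theta>) ` (sphere 0 1 \<times> {0<..})"
  proof (intro set_eqI iffI)
    fix p assume "p \<in> over_graph"
    then have "p \<noteq> 0" "norm p > r (sgn p)" by (auto simp: over_graph_def)
    then have "p = (r (sgn p) + (norm p - r (sgn p))) *\<^sub>R sgn p"
      by (simp add: sgn_div_norm)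
    then show "p \<in> (\<lambda>(\<theta>,s). (r \<theta> + s) *\<^sub>R \<theta>) ` (sphere 0 1 \<times> {0<..})"
      using \<open>p \<noteq> 0\<close> \<open>norm p > r (sgn p)\<close>
      by (intro image_eqI[where x="(sgn p, norm p - r (sgn p))"]) (auto simp: norm_sgn)
  next
    fix p assume "p \<in> (\<lambda>(\<theta>,s). (r \<theta> + s) *\<^sub>R \<theta>) ` (sphere 0 1 \<times> {0<..})"
    then obtain \<theta> s where th: "\<theta> \<in> sphere 0 1" "s > 0" "p = (r \<theta> + s) *\<^sub>R \<theta>" by auto
    moreover have "r \<theta> > 0" using r_pos[OF th(1)] .
    ultimately show "p \<in> over_graph" by (auto simp: over_graph_def sgn_scaleR sgn_div_norm)
  qed
  also have "connected \<dots>"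
    using continuous_on_r
    by (intro connected_continuous_image connected_Times connected_sphere assms)
       (auto intro!: continuous_intros continuous_on_compose2[of "sphere 0 1" r] simp: split_beta)
  finally show ?thesis .
qed


definition "\<beta> = 1 + 2*L/\<rho>"
definition "C = 2*\<beta>/\<rho>"
definition "d1 = \<rho>/(2*\<beta>)"
definition "K = 2*C + 2 + 24/d1"

lemma beta_ge_1: "\<beta> \<ge> 1"
  using L_nonneg rho_pos by (simp add: \<beta>_def)

lemma constants_pos: "C > 0" "d1 > 0" "K > 0"
  using rho_pos beta_ge_1 by (simp_all add: C_def d1_def K_def add_pos_pos)

lemma constants_rel: "d1 \<le> \<rho>/2" "C * d1 = 1" "\<beta> * d1 = \<rho>/2"
proof -
  show "d1 \<le> \<rho>/2" unfolding d1_def using rho_pos beta_ge_1 by (intro divide_left_mono) auto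
  show "C * d1 = 1" "\<beta> * d1 = \<rho>/2" using rho_pos beta_ge_1 by (simp_all add: C_def d1_def)
qed

lemma K_le: "K \<le> 106 / \<rho>^3"
proof -
  have "1 \<le> 2/\<rho>" using rho_pos rho_le_1 by (simp add: le_divide_eq)
  have "1 \<le> 2/\<rho>" using rho_pos rho_le_1 by (simp add: le_divide_eq)
  have "\<beta> = 1 + 2 * (1/\<rho> - 1) / \<rho>"
    using L_nonneg by (simp add: \<beta>_def \<rho>_def)
  also have "\<dots> = 2/\<rho>^2 - (2/\<rho> - 1)"
    using rho_pos by (simp add: power2_eq_square diff_divide_distrib)
  also have "\<dots> \<le> 2/\<rho>^2"
    using \<open>1 \<le> 2/\<rho>\<close> by linarith
  finally have \<beta>: "\<beta> \<le> 2/\<rho>^2" .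
  have "K = 52 * \<beta> / \<rho> + 2"
    by (simp add: K_def C_def d1_def)
  also have "\<dots> \<le> 52 * (2/\<rho>^2) / \<rho> + 2/\<rho>^3"
    using \<beta> rho_pos rho_le_1 by (intro add_mono divide_right_mono) (auto simp: le_divide_eq power_le_one)
  also have "\<dots> = 106 / \<rho>^3"
    by (simp add: power2_eq_square power3_eq_cube)
  finally show ?thesis .
qed

lemma K_mult_ge_24: "d1 \<le> d \<Longrightarrow> 24 \<le> K * d"
proof -
  assume "d1 \<le> d"
  then have "24 / d1 * d1 \<le> 24 / d1 * d" using constants_pos by (intro mult_left_mono) auto
  moreover have "0 \<le> (2 * C + 2) * d" using constants_pos \<open>d1 \<le> d\<close> by simp
  ultimately show ?thesis using constants_pos by (simp add: K_def algebra_simps)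
qed

lemma chord_point_near_Gamma:
  assumes x: "x \<in> \<Gamma>" and y: "y \<in> \<Gamma>" and d: "norm (x - y) \<le> \<rho>/2"
    and p: "p \<in> closed_segment x y"
  shows "p \<noteq> 0 \<and> \<bar>norm p - r (sgn p)\<bar> \<le> \<beta> * norm (x - y)"
proof -
  have px: "norm (p - x) \<le> norm (x - y)"
    using p by (metis dist_commute dist_norm dist_in_closed_segment(1) norm_minus_commute)
  have x0: "x \<noteq> 0" and nx: "norm x = r (sgn x)" using x by (auto simp: mem_Gamma_iff)
  have nxr: "\<rho> \<le> norm x" using norm_Gamma_bounds[OF x] by simp
  have "norm p \<ge> norm x - norm (p - x)"
    by (metis norm_minus_commute norm_triangle_ineq2 diff_le_eq add.commute)
  then have "norm p \<ge> \<rho>/2" using px d nxr by linarith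
  then have p0: "p \<noteq> 0" using rho_pos by auto
  have "norm (sgn p - sgn x) \<le> 2 * norm (p - x) / norm x" by (rule norm_sgn_diff_le[OF x0])
  also have "\<dots> \<le> 2 * norm (x - y) / \<rho>"
    using px nxr rho_pos by (intro frac_le) auto
  finally have s: "norm (sgn p - sgn x) \<le> 2 * norm (x - y) / \<rho>" .
  have "\<bar>r (sgn p) - r (sgn x)\<bar> \<le> L * norm (sgn p - sgn x)"
    by (rule r_lipschitz[OF sgn_in_sphere[OF p0] sgn_in_sphere[OF x0]])
  also have "\<dots> \<le> L * (2 * norm (x - y) / \<rho>)"
    using s L_nonneg by (rule mult_left_mono)
  finally have r1: "\<bar>r (sgn p) - r (sgn x)\<bar> \<le> 2 * L / \<rho> * norm (x - y)" by (simp add: mult_ac)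
  have n1: "\<bar>norm p - norm x\<bar> \<le> norm (x - y)"
    using px by (metis norm_triangle_ineq3 order_trans)
  have "\<bar>norm p - r (sgn p)\<bar> \<le> \<bar>norm p - norm x\<bar> + \<bar>r (sgn p) - r (sgn x)\<bar>"
    using nx by linarith
  also have "\<dots> \<le> norm (x - y) + 2 * L / \<rho> * norm (x - y)" using n1 r1 by linarith
  also have "\<dots> = \<beta> * norm (x - y)" by (simp add: \<beta>_def algebra_simps)
  finally show ?thesis using p0 by simp
qed

lemma Gamma_ray_distance:
  assumes x: "x \<in> \<Gamma>" and y: "y \<in> \<Gamma>" and t: "t \<ge> 0"
  shows "norm (x - t *\<^sub>R y) \<ge> \<rho>/4 * norm (sgn x - sgn y)"
proof -
  define a where "a = norm x"
  define u where "u = t * norm y"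
  define D where "D = norm (sgn x - sgn y)"
  have x0: "x \<noteq> 0" and y0: "y \<noteq> 0" using x y by (auto simp: mem_Gamma_iff)
  have xe: "x = a *\<^sub>R sgn x" and ye: "t *\<^sub>R y = u *\<^sub>R sgn y"
    using x0 y0 by (auto simp: a_def u_def sgn_div_norm)
  have a: "a \<ge> \<rho>" using norm_Gamma_bounds[OF x] by (simp add: a_def)
  have u: "u \<ge> 0" using t by (simp add: u_def)
  have D: "0 \<le> D" "D \<le> 2"
    using norm_triangle_ineq4[of "sgn x" "sgn y"] x0 y0 by (auto simp: D_def norm_sgn)
  have eq: "(norm (x - t *\<^sub>R y))\<^sup>2 = (a - u)\<^sup>2 + a * u * D\<^sup>2"
    unfolding D_def by (subst xe, subst ye, rule norm_scaleR_diff_units_sq) (use x0 y0 in \<open>auto simp: norm_sgn\<close>)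
  have \<rho>a: "\<rho>\<^sup>2 \<le> a\<^sup>2" using a rho_pos by (intro power_mono) auto
  have "(\<rho>/4 * D)\<^sup>2 \<le> (a - u)\<^sup>2 + a * u * D\<^sup>2"
  proof (cases "u \<ge> a/2")
    case True
    have "a * a \<le> a * (2 * u)" using True a rho_pos by (intro mult_left_mono) auto
    moreover have "0 \<le> a * u" using a u rho_pos by simp
    ultimately have "\<rho>\<^sup>2/16 \<le> a * u" using \<rho>a by (simp add: power2_eq_square)
    then have "\<rho>\<^sup>2/16 * D\<^sup>2 \<le> a * u * D\<^sup>2" by (rule mult_right_mono) simp
    moreover have "(\<rho>/4 * D)\<^sup>2 = \<rho>\<^sup>2/16 * D\<^sup>2" by (simp add: power2_eq_square)
    ultimately show ?thesis using zero_le_power2[of "a - u"] by linarith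
  next
    case False
    have "(\<rho>/4 * D)\<^sup>2 = \<rho>\<^sup>2/16 * D\<^sup>2" by (simp add: power2_eq_square)
    also have "\<dots> \<le> \<rho>\<^sup>2/16 * 4"
      using D power_mono[of D 2 2] by (intro mult_left_mono) auto
    also have "\<dots> \<le> (a/2)\<^sup>2" using \<rho>a by (simp add: power_divide)
    also have "\<dots> \<le> (a - u)\<^sup>2" using False u a rho_pos by (intro power_mono) auto
    moreover have "0 \<le> a * u * D\<^sup>2" using a u rho_pos by simp
    ultimately show ?thesis by linarith
  qed
  then have "(\<rho>/4 * D)\<^sup>2 \<le> (norm (x - t *\<^sub>R y))\<^sup>2" using eq by simp
  then show ?thesis unfolding D_def[symmetric] by (rule power2_le_imp_le) simp
qed

lemma Gamma_chord_le:
  assumes x: "x \<in> \<Gamma>" and y: "y \<in> \<Gamma>"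
  shows "norm (x - y) \<le> (L + 1) * norm (sgn x - sgn y)"
proof -
  have x0: "x \<noteq> 0" and y0: "y \<noteq> 0" and nx: "norm x = r (sgn x)" and ny: "norm y = r (sgn y)"
    using x y by (auto simp: mem_Gamma_iff)
  have "x - y = (norm x - norm y) *\<^sub>R sgn x + norm y *\<^sub>R (sgn x - sgn y)"
    using x0 y0 by (simp add: sgn_div_norm algebra_simps)
  then have "norm (x - y) \<le> \<bar>norm x - norm y\<bar> * norm (sgn x) + norm y * norm (sgn x - sgn y)"
    by (metis norm_triangle_ineq norm_scaleR abs_norm_cancel)
  also have "\<dots> \<le> L * norm (sgn x - sgn y) + 1 * norm (sgn x - sgn y)"
  proof (intro add_mono mult_right_mono)
    show "\<bar>norm x - norm y\<bar> * norm (sgn x) \<le> L * norm (sgn x - sgn y)"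
      using r_lipschitz[OF sgn_in_sphere[OF x0] sgn_in_sphere[OF y0]] nx ny x0 by (simp add: norm_sgn)
    show "norm y \<le> 1" using norm_Gamma_bounds[OF y] by simp
  qed simp
  finally show ?thesis by (simp add: algebra_simps)
qed

lemma Gamma_ray_distance_chord:
  assumes x: "x \<in> \<Gamma>" and y: "y \<in> \<Gamma>" and t: "t \<ge> 0"
  shows "\<rho> / (4 * (L + 1)) * norm (x - y) \<le> norm (x - t *\<^sub>R y)"
proof -
  have "norm (x - y) / (L + 1) \<le> norm (sgn x - sgn y)"
    using Gamma_chord_le[OF x y] L_nonneg by (simp add: field_simps)
  then have "\<rho>/4 * (norm (x - y) / (L + 1)) \<le> \<rho>/4 * norm (sgn x - sgn y)"
    using rho_pos by (intro mult_left_mono) auto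
  also have "\<dots> \<le> norm (x - t *\<^sub>R y)" by (rule Gamma_ray_distance[OF x y t])
  finally show ?thesis by (simp add: field_simps)
qed

lemma Gamma_subset_under_graph_cl: "\<Gamma> \<subseteq> under_graph_cl"
  and Gamma_subset_over_graph_cl: "\<Gamma> \<subseteq> over_graph_cl"
  by (auto simp: under_graph_cl_def over_graph_cl_def mem_Gamma_iff)

lemma radial_segment_under_graph_cl:
  assumes "x \<in> under_graph_cl" "0 \<le> s" "s \<le> 1"
  shows "closed_segment x (s *\<^sub>R x) \<subseteq> under_graph_cl"
proof
  fix z assume "z \<in> closed_segment x (s *\<^sub>R x)"
  then obtain u where u: "0 \<le> u" "u \<le> 1" "z = ((1 - u) + u * s) *\<^sub>R x"
    by (auto simp: closed_segment_def algebra_simps)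
  moreover have "0 \<le> (1 - u) + u * s" "(1 - u) + u * s \<le> 1"
    using u assms mult_left_le[of s u] by auto
  ultimately show "z \<in> under_graph_cl" using under_graph_cl_scaleR[OF assms(1)] by simp
qed

lemma radial_segment_over_graph_cl:
  assumes "x \<in> over_graph_cl" "1 \<le> s"
  shows "closed_segment x (s *\<^sub>R x) \<subseteq> over_graph_cl"
proof
  fix z assume "z \<in> closed_segment x (s *\<^sub>R x)"
  then obtain u where u: "0 \<le> u" "u \<le> 1" "z = ((1 - u) + u * s) *\<^sub>R x"
    by (auto simp: closed_segment_def algebra_simps)
  moreover have "1 \<le> (1 - u) + u * s" using u assms mult_left_mono[of 1 s u] by simp
  ultimately show "z \<in> over_graph_cl" using over_graph_cl_scaleR[OF assms(1)] by simp
qed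

text \<open>Shrinking (resp. stretching) a short chord of \<open>\<Gamma>\<close> by the factor \<open>1 \<mp> C |x - y|\<close>
  absorbs the radial defect \<open>\<beta> |x - y|\<close> of its points.\<close>

lemma scaled_chord_under_graph_cl:
  assumes x: "x \<in> \<Gamma>" and y: "y \<in> \<Gamma>" and d: "norm (x - y) \<le> d1"
    and l: "l = 1 - C * norm (x - y)"
  shows "closed_segment (l *\<^sub>R x) (l *\<^sub>R y) \<subseteq> under_graph_cl"
proof
  define d where "d = norm (x - y)"
  have Cd: "C * d \<le> 1" using d constants_pos constants_rel mult_left_mono[of d d1 C] by (simp add: d_def)
  have l01: "0 \<le> l" "l \<le> 1" using Cd constants_pos by (auto simp: l d_def)
  fix z assume "z \<in> closed_segment (l *\<^sub>R x) (l *\<^sub>R y)"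
  then obtain u where u: "0 \<le> u" "u \<le> 1" "z = (1 - u) *\<^sub>R (l *\<^sub>R x) + u *\<^sub>R (l *\<^sub>R y)"
    by (auto simp: closed_segment_def)
  define p where "p = (1 - u) *\<^sub>R x + u *\<^sub>R y"
  have zp: "z = l *\<^sub>R p" using u by (simp add: p_def algebra_simps)
  have p: "p \<in> closed_segment x y" using u by (auto simp: closed_segment_def p_def)
  have "norm (x - y) \<le> \<rho>/2" using d constants_rel by linarith
  then have p0: "p \<noteq> 0" and est: "norm p \<le> r (sgn p) + \<beta> * d"
    using chord_point_near_Gamma[OF x y _ p] by (auto simp: d_def)
  show "z \<in> under_graph_cl"
  proof (cases "l = 0")
    case True then show ?thesis using zp by (simp add: under_graph_cl_def)
  next
    case False
    have "C * d * r (sgn p) \<ge> C * d * \<rho>"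
      using r_sgn_ge_rho[OF p0] constants_pos by (intro mult_left_mono) (auto simp: d_def)
    moreover have "C * d * \<rho> = 2 * (\<beta> * d)" using rho_pos by (simp add: C_def field_simps)
    moreover have "l * norm p \<le> l * (r (sgn p) + \<beta> * d)" using est l01(1) by (rule mult_left_mono)
    moreover have "l * (r (sgn p) + \<beta> * d) = r (sgn p) + \<beta> * d - C * d * r (sgn p) - C * d * (\<beta> * d)"
      by (simp add: l d_def algebra_simps)
    moreover have "0 \<le> C * d * (\<beta> * d)" "0 \<le> \<beta> * d"
      using constants_pos beta_ge_1 by (auto simp: d_def)
    ultimately have "l * norm p \<le> r (sgn p)" by linarith
    then show ?thesis using zp False l01 p0 by (simp add: under_graph_cl_def sgn_scaleR)
  qed
qed

lemma scaled_chord_over_graph_cl: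
  assumes x: "x \<in> \<Gamma>" and y: "y \<in> \<Gamma>" and d: "norm (x - y) \<le> d1"
    and l: "l = 1 + C * norm (x - y)"
  shows "closed_segment (l *\<^sub>R x) (l *\<^sub>R y) \<subseteq> over_graph_cl"
proof
  define d where "d = norm (x - y)"
  have "\<beta> * d \<le> \<beta> * d1" by (rule mult_left_mono) (use d beta_ge_1 in \<open>auto simp: d_def\<close>)
  then have bd: "\<beta> * d \<le> \<rho>/2" using constants_rel by linarith
  have l1: "1 \<le> l" using constants_pos by (simp add: l)
  fix z assume "z \<in> closed_segment (l *\<^sub>R x) (l *\<^sub>R y)"
  then obtain u where u: "0 \<le> u" "u \<le> 1" "z = (1 - u) *\<^sub>R (l *\<^sub>R x) + u *\<^sub>R (l *\<^sub>R y)"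
    by (auto simp: closed_segment_def)
  define p where "p = (1 - u) *\<^sub>R x + u *\<^sub>R y"
  have zp: "z = l *\<^sub>R p" using u by (simp add: p_def algebra_simps)
  have p: "p \<in> closed_segment x y" using u by (auto simp: closed_segment_def p_def)
  have "norm (x - y) \<le> \<rho>/2" using d constants_rel by linarith
  then have p0: "p \<noteq> 0" and est: "r (sgn p) - \<beta> * d \<le> norm p"
    using chord_point_near_Gamma[OF x y _ p] by (auto simp: d_def)
  have "C * d * (r (sgn p) - \<beta> * d) \<ge> C * d * (\<rho>/2)"
    using r_sgn_ge_rho[OF p0] bd constants_pos by (intro mult_left_mono) (auto simp: d_def)
  moreover have "C * d * (\<rho>/2) = \<beta> * d" using rho_pos by (simp add: C_def field_simps)
  ultimately have "r (sgn p) \<le> (r (sgn p) - \<beta> * d) + C * d * (r (sgn p) - \<beta> * d)" by linarith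
  also have "\<dots> = l * (r (sgn p) - \<beta> * d)" by (simp add: l d_def algebra_simps)
  also have "\<dots> \<le> l * norm p" using est l1 by (intro mult_left_mono) auto
  finally have "r (sgn p) \<le> l * norm p" .
  then show "z \<in> over_graph_cl" using zp l1 p0 by (simp add: over_graph_cl_def sgn_scaleR)
qed

lemma radial_segment_to_3_over_graph_cl:
  assumes "p \<in> over_graph_cl" "norm p \<le> 3"
  shows "closed_segment p (3 *\<^sub>R sgn p) \<subseteq> over_graph_cl"
proof -
  have "p \<noteq> 0" using assms by (simp add: over_graph_cl_def)
  then have "3 *\<^sub>R sgn p = (3 / norm p) *\<^sub>R p" "1 \<le> 3 / norm p"
    using assms by (simp add: sgn_div_norm divide_inverse, simp add: le_divide_eq)
  then show ?thesis using radial_segment_over_graph_cl[OF assms(1), of "3 / norm p"] by simp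
qed

lemma scaled_arc_over_graph_cl:
  assumes "norm \<theta> = 1" "norm \<psi> = 1" "\<theta> \<bullet> \<psi> \<ge> 0"
  shows "closed_segment (3 *\<^sub>R \<theta>) (3 *\<^sub>R \<psi>) \<subseteq> over_graph_cl"
proof
  fix z assume "z \<in> closed_segment (3 *\<^sub>R \<theta>) (3 *\<^sub>R \<psi>)"
  then have "1 \<le> norm z" by (rule norm_ge_1_on_segment_scaled_units[OF assms])
  moreover from this have "z \<noteq> 0" by auto
  ultimately show "z \<in> over_graph_cl" using r_sgn_le_1[of z] by (auto simp: over_graph_cl_def)
qed

end

section \<open>Maps close to the identity on a domain bounded by a radial graph\<close>

locale near_identity = radial_graph r L for r :: "'a::euclidean_space \<Rightarrow> real" and L +
  fixes \<Omega> :: "'a set" and \<psi> :: "'a \<Rightarrow> 'a" and \<delta> :: real and \<psi>' :: "'a \<Rightarrow> 'a \<Rightarrow> 'a"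
  assumes open_\<Omega>: "open \<Omega>" and connected_\<Omega>: "connected \<Omega>" and frontier_\<Omega>: "frontier \<Omega> = \<Gamma>"
    and \<delta>_pos: "0 < \<delta>" and \<delta>_le_1: "\<delta> \<le> 1"
    and bi_lipschitz: "bi_lipschitz_on (1 + \<delta>) (closure \<Omega>) \<psi>"
    and has_derivative_\<psi>: "\<And>z. z \<in> closure \<Omega> \<Longrightarrow> (\<psi> has_derivative \<psi>' z) (at z within closure \<Omega>)"
    and derivative_near_id: "\<And>z h. z \<in> closure \<Omega> \<Longrightarrow> norm (\<psi>' z h - h) \<le> \<delta> * norm h"
begin

lemma closure_\<Omega>: "closure \<Omega> = \<Omega> \<union> \<Gamma>"
  using closure_Un_frontier frontier_\<Omega> by blast

lemma \<Omega>_Gamma_disjoint: "\<Omega> \<inter> \<Gamma> = {}"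
  using frontier_\<Omega> open_\<Omega> by (auto simp: frontier_def interior_open)

lemma dim_ge_2_if_subset_over_graph:
  assumes "\<Omega> \<subseteq> over_graph"
  shows "2 \<le> DIM('a)"
proof (rule ccontr)
  assume "\<not> 2 \<le> DIM('a)"
  then have "DIM('a) = 1" using DIM_positive[where 'a='a] by linarith
  then have cv: "convex \<Omega>" using connected_convex_1_gen connected_\<Omega> by blast
  obtain \<theta> :: 'a where "\<theta> \<in> Basis" using nonempty_Basis by blast
  then have \<theta>: "\<theta> \<in> sphere 0 1" "-\<theta> \<in> sphere 0 1" by auto
  define a where "a = r \<theta>"
  define b where "b = r (-\<theta>)"
  have ab: "a > 0" "b > 0" using r_pos \<theta> by (auto simp: a_def b_def)
  have "a *\<^sub>R \<theta> \<in> \<Gamma>" "b *\<^sub>R (-\<theta>) \<in> \<Gamma>"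
    unfolding \<Gamma>_def a_def b_def using \<theta> by (blast intro: image_eqI)+
  then have "a *\<^sub>R \<theta> \<in> closure \<Omega>" "b *\<^sub>R (-\<theta>) \<in> closure \<Omega>"
    using closure_\<Omega> by auto
  moreover have "b/(a+b) + a/(a+b) = 1" using ab by (simp add: add_divide_distrib[symmetric])
  ultimately have "(b/(a+b)) *\<^sub>R (a *\<^sub>R \<theta>) + (a/(a+b)) *\<^sub>R (b *\<^sub>R (-\<theta>)) \<in> closure \<Omega>"
    using ab by (intro convexD convex_closure cv) auto
  then have "0 \<in> closure \<Omega>" by (simp add: algebra_simps)
  moreover have "ball 0 \<rho> \<inter> \<Omega> = {}"
    using assms ball_rho_subset_under_graph under_over_graph_disjoint by blast
  then have "ball 0 \<rho> \<inter> closure \<Omega> = {}"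
    using open_Int_closure_eq_empty[of "ball 0 \<rho>" \<Omega>] by simp
  ultimately show False using rho_pos by (metis centre_in_ball disjoint_iff)
qed

lemma \<Omega>_cases:
  "(\<Omega> = under_graph \<and> closure \<Omega> = under_graph_cl) \<or>
   (\<Omega> = over_graph \<and> closure \<Omega> = over_graph_cl \<and> 2 \<le> DIM('a))"
proof -
  have sub: "\<Omega> \<subseteq> under_graph \<union> over_graph"
    using under_over_Gamma_cover \<Omega>_Gamma_disjoint by blast
  have \<Omega>_ne: "\<Omega> \<noteq> {}" using Gamma_nonempty frontier_\<Omega> by auto
  have fills: "U \<subseteq> \<Omega>" if "connected U" "\<Omega> \<subseteq> U" "U \<inter> \<Gamma> = {}" for U
  proof (rule ccontr)
    assume "\<not> U \<subseteq> \<Omega>"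
    then have "U \<inter> frontier \<Omega> \<noteq> {}"
      using connected_Int_frontier[OF that(1)] that(2) \<Omega>_ne by blast
    then show False using that(3) frontier_\<Omega> by auto
  qed
  have "under_graph \<inter> \<Omega> = {} \<or> over_graph \<inter> \<Omega> = {}"
    by (rule connectedD[OF connected_\<Omega> open_under_graph open_over_graph])
       (use under_over_graph_disjoint sub in auto)
  then show ?thesis
  proof
    assume "over_graph \<inter> \<Omega> = {}"
    then have "\<Omega> = under_graph"
      using sub fills[OF starlike_imp_connected[OF starlike_under_graph]] Gamma_disjoint by blast
    then show ?thesis using closure_\<Omega> under_graph_cl_eq by auto
  next
    assume "under_graph \<inter> \<Omega> = {}"
    then have "\<Omega> \<subseteq> over_graph" using sub by blast
    then have dim: "2 \<le> DIM('a)" by (rule dim_ge_2_if_subset_over_graph)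
    then have "\<Omega> = over_graph"
      using \<open>\<Omega> \<subseteq> over_graph\<close> fills[OF connected_over_graph] Gamma_disjoint by blast
    then show ?thesis using closure_\<Omega> over_graph_cl_eq dim by auto
  qed
qed

lemma \<psi>_lipschitz: "x \<in> closure \<Omega> \<Longrightarrow> y \<in> closure \<Omega> \<Longrightarrow> dist (\<psi> x) (\<psi> y) \<le> (1 + \<delta>) * dist x y"
  and \<psi>_inverse_lipschitz: "x \<in> closure \<Omega> \<Longrightarrow> y \<in> closure \<Omega> \<Longrightarrow> dist x y \<le> (1 + \<delta>) * dist (\<psi> x) (\<psi> y)"
  using bi_lipschitz \<delta>_pos by (auto simp: bi_lipschitz_on_def field_simps)

lemma continuous_on_\<psi>: "continuous_on (closure \<Omega>) \<psi>"
  using \<psi>_lipschitz \<delta>_pos by (intro lipschitz_on_continuous_on[of "1 + \<delta>"]) (auto simp: lipschitz_on_def)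

lemma inj_on_\<psi>: "inj_on \<psi> (closure \<Omega>)"
  using \<psi>_inverse_lipschitz by (intro inj_onI) force

lemma open_\<psi>_image: "open (\<psi> ` \<Omega>)"
  using continuous_on_subset[OF continuous_on_\<psi> closure_subset] open_\<Omega>
    inj_on_subset[OF inj_on_\<psi> closure_subset]
  by (rule invariance_of_domain)

lemma frontier_\<psi>_image: "frontier (\<psi> ` \<Omega>) = \<psi> ` \<Gamma>"
proof -
  have closed: "closed (\<psi> ` closure \<Omega>)"
    using \<psi>_inverse_lipschitz \<delta>_pos
    by (intro closed_image_inverse_lipschitz[OF closed_closure continuous_on_\<psi>, of "1 + \<delta>"]) auto
  have "closure (\<psi> ` \<Omega>) = \<psi> ` closure \<Omega>"
  proof
    show "closure (\<psi> ` \<Omega>) \<subseteq> \<psi> ` closure \<Omega>"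
      by (rule closure_minimal) (use closure_subset closed in auto)
    show "\<psi> ` closure \<Omega> \<subseteq> closure (\<psi> ` \<Omega>)"
      by (rule image_closure_subset[OF continuous_on_\<psi> closed_closure closure_subset])
  qed
  then have "frontier (\<psi> ` \<Omega>) = \<psi> ` closure \<Omega> - \<psi> ` \<Omega>"
    using open_\<psi>_image by (simp add: frontier_def interior_open)
  also have "\<dots> = \<psi> ` (closure \<Omega> - \<Omega>)"
    by (rule inj_on_image_set_diff[symmetric, OF inj_on_\<psi>]) (use closure_subset in auto)
  also have "closure \<Omega> - \<Omega> = \<Gamma>" using frontier_\<Omega> open_\<Omega> by (simp add: frontier_def interior_open)
  finally show ?thesis .
qed

definition "disp x = \<psi> x - x"

lemma disp_segment_lipschitz:
  assumes "closed_segment a b \<subseteq> closure \<Omega>"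
  shows "norm (disp a - disp b) \<le> \<delta> * norm (a - b)"
proof (rule differentiable_bound[where S="closed_segment a b" and f'="\<lambda>z h. \<psi>' z h - h"])
  fix z assume z: "z \<in> closed_segment a b"
  then have zc: "z \<in> closure \<Omega>" using assms by blast
  have "(\<psi> has_derivative \<psi>' z) (at z within closed_segment a b)"
    by (rule has_derivative_subset[OF has_derivative_\<psi>[OF zc] assms])
  then show "(disp has_derivative (\<lambda>h. \<psi>' z h - h)) (at z within closed_segment a b)"
    unfolding disp_def[abs_def] by (intro has_derivative_diff has_derivative_ident)
  show "onorm (\<lambda>h. \<psi>' z h - h) \<le> \<delta>"
    by (rule onorm_le) (rule derivative_near_id[OF zc])
qed auto

lemma disp_polygon_lipschitz:
  assumes "closed_segment a b \<subseteq> closure \<Omega>" "closed_segment b c \<subseteq> closure \<Omega>" "closed_segment c d \<subseteq> closure \<Omega>"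
  shows "norm (disp a - disp d) \<le> \<delta> * (norm (a - b) + norm (b - c) + norm (c - d))"
proof -
  have "norm (disp a - disp d) \<le> norm (disp a - disp b) + norm (disp b - disp c) + norm (disp c - disp d)"
    using norm_triangle_ineq[of "disp a - disp b" "disp b - disp d"]
      norm_triangle_ineq[of "disp b - disp c" "disp c - disp d"] by simp
  also have "\<dots> \<le> \<delta> * norm (a - b) + \<delta> * norm (b - c) + \<delta> * norm (c - d)"
    using disp_segment_lipschitz assms by (intro add_mono) auto
  finally show ?thesis by (simp add: algebra_simps)
qed


lemma disp_Gamma_via_scaled_chord:
  assumes x: "x \<in> \<Gamma>" and y: "y \<in> \<Gamma>" and l: "0 \<le> l" "l \<le> 2" "\<bar>1 - l\<bar> \<le> C * norm (x - y)"
    and "closed_segment x (l *\<^sub>R x) \<subseteq> closure \<Omega>" "closed_segment (l *\<^sub>R x) (l *\<^sub>R y) \<subseteq> closure \<Omega>"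
    and "closed_segment (l *\<^sub>R y) y \<subseteq> closure \<Omega>"
  shows "norm (disp x - disp y) \<le> K * \<delta> * norm (x - y)"
proof -
  define d where "d = norm (x - y)"
  have "norm (x - l *\<^sub>R x) = \<bar>1 - l\<bar> * norm x" "norm (l *\<^sub>R y - y) = \<bar>1 - l\<bar> * norm y"
    by (metis norm_scaleR scaleR_diff_left scaleR_one, metis norm_minus_commute norm_scaleR scaleR_diff_left scaleR_one)
  moreover have "norm (l *\<^sub>R x - l *\<^sub>R y) = l * d"
    using l by (simp add: d_def scaleR_diff_right[symmetric])
  moreover have "\<bar>1 - l\<bar> * norm x \<le> C * d" "\<bar>1 - l\<bar> * norm y \<le> C * d"
    using l norm_Gamma_bounds[OF x] norm_Gamma_bounds[OF y]
    by (auto simp: d_def intro: order_trans[OF mult_left_le])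
  moreover have "l * d \<le> 2 * d" using l by (intro mult_right_mono) (auto simp: d_def)
  moreover have "K * d = 2 * (C * d) + 2 * d + 24 / d1 * d" by (simp add: K_def algebra_simps)
  moreover have "0 \<le> 24 / d1 * d" using constants_pos by (simp add: d_def)
  ultimately have "norm (x - l *\<^sub>R x) + norm (l *\<^sub>R x - l *\<^sub>R y) + norm (l *\<^sub>R y - y) \<le> K * d"
    by linarith
  then have "\<delta> * (norm (x - l *\<^sub>R x) + norm (l *\<^sub>R x - l *\<^sub>R y) + norm (l *\<^sub>R y - y)) \<le> \<delta> * (K * d)"
    using \<delta>_pos by (intro mult_left_mono) auto
  with disp_polygon_lipschitz[OF assms(6-8)] show ?thesis by (simp add: d_def mult_ac)
qed

lemma disp_Gamma_lipschitz_under: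
  assumes cl: "closure \<Omega> = under_graph_cl" and x: "x \<in> \<Gamma>" and y: "y \<in> \<Gamma>"
  shows "norm (disp x - disp y) \<le> K * \<delta> * norm (x - y)"
proof (cases "norm (x - y) \<le> d1")
  case True
  define l where "l = 1 - C * norm (x - y)"
  have "C * norm (x - y) \<le> C * d1" using True constants_pos by (intro mult_left_mono) auto
  moreover have "0 \<le> C * norm (x - y)" using constants_pos by simp
  ultimately have l01: "0 \<le> l" "l \<le> 1" using constants_rel by (auto simp: l_def)
  show ?thesis
  proof (rule disp_Gamma_via_scaled_chord[OF x y, of l])
    show "closed_segment x (l *\<^sub>R x) \<subseteq> closure \<Omega>" "closed_segment (l *\<^sub>R y) y \<subseteq> closure \<Omega>"
      using radial_segment_under_graph_cl[OF _ l01] Gamma_subset_under_graph_cl x y cl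
      by (auto simp: closed_segment_commute)
    show "closed_segment (l *\<^sub>R x) (l *\<^sub>R y) \<subseteq> closure \<Omega>"
      using scaled_chord_under_graph_cl[OF x y True l_def] cl by simp
  qed (use l01 \<open>0 \<le> C * norm (x - y)\<close> in \<open>auto simp: l_def\<close>)
next
  case False
  have "closed_segment x 0 \<subseteq> closure \<Omega>" "closed_segment y 0 \<subseteq> closure \<Omega>"
    using radial_segment_under_graph_cl[of _ 0] Gamma_subset_under_graph_cl x y cl by auto
  then have "closed_segment x 0 \<subseteq> closure \<Omega>" "closed_segment 0 y \<subseteq> closure \<Omega>"
    by (simp_all add: closed_segment_commute)
  then have "norm (disp x - disp y) \<le> \<delta> * (norm x + 0 + norm y)"
    using disp_polygon_lipschitz[of x 0 0 y] cl by (simp add: under_graph_cl_def)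
  also have "\<dots> \<le> \<delta> * 24"
    using norm_Gamma_bounds[OF x] norm_Gamma_bounds[OF y] \<delta>_pos by (intro mult_left_mono) auto
  also have "\<dots> \<le> \<delta> * (K * norm (x - y))"
    using K_mult_ge_24 False \<delta>_pos by (intro mult_left_mono) auto
  finally show ?thesis by (simp add: mult_ac)
qed

text \<open>Outside, two points are joined through the sphere of radius 3, where \<open>\<Omega>\<close> contains the
  short arcs between directions with nonnegative inner product.\<close>

lemma disp_bounded_over:
  assumes cl: "closure \<Omega> = over_graph_cl" and dim: "2 \<le> DIM('a)"
    and p: "p \<in> over_graph_cl" "norm p \<le> 3" and p': "p' \<in> over_graph_cl" "norm p' \<le> 3"
  shows "norm (disp p - disp p') \<le> 24 * \<delta>"
proof -
  define \<theta> where "\<theta> = sgn p"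
  define \<theta>' where "\<theta>' = sgn p'"
  have nt: "norm \<theta> = 1" "norm \<theta>' = 1" using p p' by (auto simp: \<theta>_def \<theta>'_def norm_sgn over_graph_cl_def)
  obtain \<omega> where w: "norm \<omega> = 1" "\<theta> \<bullet> \<omega> \<ge> 0" "\<theta>' \<bullet> \<omega> \<ge> 0"
    using exists_unit_nonneg_inner_both[OF dim nt] by blast
  have bound6: "norm (a - b) \<le> 6" if "norm a \<le> 3" "norm b \<le> 3" for a b :: 'a
    using norm_triangle_ineq4[of a b] that by simp
  have "3 *\<^sub>R \<omega> \<in> over_graph_cl"
    using scaled_arc_over_graph_cl[OF nt(1) w(1,2)] ends_in_segment(2) by blast
  have "norm (disp p - disp (3 *\<^sub>R \<omega>)) \<le> \<delta> * (norm (p - 3 *\<^sub>R \<theta>) + norm (3 *\<^sub>R \<theta> - 3 *\<^sub>R \<omega>) + 0)"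
    using disp_polygon_lipschitz[of p "3 *\<^sub>R \<theta>" "3 *\<^sub>R \<omega>" "3 *\<^sub>R \<omega>"]
      radial_segment_to_3_over_graph_cl[OF p] scaled_arc_over_graph_cl[OF nt(1) w(1,2)] cl
      \<open>3 *\<^sub>R \<omega> \<in> over_graph_cl\<close>
    by (simp add: \<theta>_def)
  also have "\<dots> \<le> \<delta> * 12"
    using bound6[of p "3 *\<^sub>R \<theta>"] bound6[of "3 *\<^sub>R \<theta>" "3 *\<^sub>R \<omega>"] p nt w \<delta>_pos
    by (intro mult_left_mono) auto
  finally have to_\<omega>: "norm (disp p - disp (3 *\<^sub>R \<omega>)) \<le> \<delta> * 12" .
  have "norm (disp (3 *\<^sub>R \<omega>) - disp p') \<le> \<delta> * (norm (3 *\<^sub>R \<omega> - 3 *\<^sub>R \<theta>') + norm (3 *\<^sub>R \<theta>' - p') + 0)"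
    using disp_polygon_lipschitz[of "3 *\<^sub>R \<omega>" "3 *\<^sub>R \<theta>'" p' p']
      radial_segment_to_3_over_graph_cl[OF p'] scaled_arc_over_graph_cl[OF w(1) nt(2)] w(3) cl p'(1)
    by (simp add: \<theta>'_def closed_segment_commute inner_commute)
  also have "\<dots> \<le> \<delta> * 12"
    using bound6[of "3 *\<^sub>R \<omega>" "3 *\<^sub>R \<theta>'"] bound6[of "3 *\<^sub>R \<theta>'" p'] p' nt w \<delta>_pos
    by (intro mult_left_mono) auto
  finally have "norm (disp (3 *\<^sub>R \<omega>) - disp p') \<le> \<delta> * 12" .
  with to_\<omega> show ?thesis
    using norm_triangle_ineq[of "disp p - disp (3 *\<^sub>R \<omega>)" "disp (3 *\<^sub>R \<omega>) - disp p'"] by simp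
qed

lemma disp_Gamma_lipschitz_over:
  assumes cl: "closure \<Omega> = over_graph_cl" and dim: "2 \<le> DIM('a)" and x: "x \<in> \<Gamma>" and y: "y \<in> \<Gamma>"
  shows "norm (disp x - disp y) \<le> K * \<delta> * norm (x - y)"
proof (cases "norm (x - y) \<le> d1")
  case True
  define l where "l = 1 + C * norm (x - y)"
  have "C * norm (x - y) \<le> C * d1" using True constants_pos by (intro mult_left_mono) auto
  moreover have "0 \<le> C * norm (x - y)" using constants_pos by simp
  ultimately have l12: "1 \<le> l" "l \<le> 2" using constants_rel by (auto simp: l_def)
  show ?thesis
  proof (rule disp_Gamma_via_scaled_chord[OF x y, of l])
    show "closed_segment x (l *\<^sub>R x) \<subseteq> closure \<Omega>" "closed_segment (l *\<^sub>R y) y \<subseteq> closure \<Omega>"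
      using radial_segment_over_graph_cl[OF _ l12(1)] Gamma_subset_over_graph_cl x y cl
      by (auto simp: closed_segment_commute)
    show "closed_segment (l *\<^sub>R x) (l *\<^sub>R y) \<subseteq> closure \<Omega>"
      using scaled_chord_over_graph_cl[OF x y True l_def] cl by simp
  qed (use l12 \<open>0 \<le> C * norm (x - y)\<close> in \<open>auto simp: l_def\<close>)
next
  case False
  have "norm (disp x - disp y) \<le> 24 * \<delta>"
    using disp_bounded_over[OF cl dim] x y Gamma_subset_over_graph_cl norm_Gamma_bounds by force
  also have "\<dots> \<le> K * \<delta> * norm (x - y)"
    using K_mult_ge_24[of "norm (x - y)"] False \<delta>_pos mult_right_mono[of 24 "K * norm (x - y)" \<delta>]
    by (simp add: mult_ac)
  finally show ?thesis .
qed

lemma disp_Gamma_lipschitz: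
  "x \<in> \<Gamma> \<Longrightarrow> y \<in> \<Gamma> \<Longrightarrow> norm (disp x - disp y) \<le> K * \<delta> * norm (x - y)"
  using \<Omega>_cases disp_Gamma_lipschitz_under disp_Gamma_lipschitz_over by blast


text \<open>The image is viewed from \<open>centre\<close>: inside this is \<open>\<psi> 0\<close>; outside it is the origin moved
  by the displacement of some point of \<open>\<Gamma>\<close>, which keeps the relative displacement on \<open>\<Gamma>\<close>
  of size \<open>O(\<delta>)\<close>.\<close>

definition "base = (if 0 \<in> \<Omega> then 0 else (SOME x. x \<in> \<Gamma>))"
definition "centre = disp base"
definition "rel_disp x = disp x - disp base"

lemma
  assumes "0 \<in> \<Omega>"
  shows base_under: "base = 0"
    and \<Omega>_eq_under_graph: "\<Omega> = under_graph" and closure_\<Omega>_under: "closure \<Omega> = under_graph_cl"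
proof -
  show "base = 0" using assms by (simp add: base_def)
  have "0 \<notin> over_graph" by (simp add: over_graph_def)
  then show "\<Omega> = under_graph" "closure \<Omega> = under_graph_cl" using \<Omega>_cases assms by blast+
qed

lemma
  assumes "0 \<notin> \<Omega>"
  shows base_over: "base \<in> \<Gamma>" and \<Omega>_eq_over_graph: "\<Omega> = over_graph"
    and closure_\<Omega>_over: "closure \<Omega> = over_graph_cl" and dim_ge_2_over: "2 \<le> DIM('a)"
proof -
  show "base \<in> \<Gamma>" using assms Gamma_nonempty by (simp add: base_def some_in_eq)
  have "0 \<in> under_graph" by (simp add: under_graph_def)
  then show "\<Omega> = over_graph" "closure \<Omega> = over_graph_cl" "2 \<le> DIM('a)" using \<Omega>_cases assms by blast+
qed

lemma \<psi>_minus_centre: "\<psi> x - centre = x + rel_disp x"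
  by (simp add: centre_def rel_disp_def disp_def)

lemma rel_disp_lipschitz: "x \<in> \<Gamma> \<Longrightarrow> y \<in> \<Gamma> \<Longrightarrow> norm (rel_disp x - rel_disp y) \<le> K * \<delta> * norm (x - y)"
  unfolding rel_disp_def using disp_Gamma_lipschitz[of x y] by (simp add: algebra_simps)

lemma rel_disp_bound:
  assumes x: "x \<in> \<Gamma>"
  shows "norm (rel_disp x) \<le> 24 * \<delta>"
proof (cases "0 \<in> \<Omega>")
  case True
  then have "base = 0" "closed_segment x 0 \<subseteq> closure \<Omega>"
    using radial_segment_under_graph_cl[of x 0] Gamma_subset_under_graph_cl x
    by (auto simp: base_under closure_\<Omega>_under)
  then have "norm (rel_disp x) \<le> \<delta> * norm x"
    using disp_segment_lipschitz[of x 0] by (simp add: rel_disp_def)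
  also have "\<dots> \<le> 24 * \<delta>" using norm_Gamma_bounds[OF x] \<delta>_pos by simp
  finally show ?thesis .
next
  case False
  then have "base \<in> over_graph_cl" "norm base \<le> 3" "x \<in> over_graph_cl" "norm x \<le> 3"
    and "closure \<Omega> = over_graph_cl" "2 \<le> DIM('a)"
    using x Gamma_subset_over_graph_cl norm_Gamma_bounds[of base] norm_Gamma_bounds[OF x]
      base_over closure_\<Omega>_over dim_ge_2_over by auto
  then show ?thesis using disp_bounded_over by (simp add: rel_disp_def)
qed

lemma ray_exits_image_under:
  assumes "0 \<in> \<Omega>" "norm \<omega> = 1"
  shows "centre + 3 *\<^sub>R \<omega> \<notin> \<psi> ` \<Omega>"
proof
  assume "centre + 3 *\<^sub>R \<omega> \<in> \<psi> ` \<Omega>"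
  then obtain z where z: "z \<in> \<Omega>" "\<psi> z = centre + 3 *\<^sub>R \<omega>" by auto
  have "z \<in> under_graph" "base = 0" using \<Omega>_eq_under_graph base_under assms(1) z(1) by auto
  then have "norm z \<le> 1" using r_sgn_le_1[of z] by (cases "z = 0") (auto simp: under_graph_def)
  have "3 = dist (\<psi> z) (\<psi> 0)"
    using z \<open>base = 0\<close> assms(2) by (simp add: centre_def disp_def dist_norm)
  also have "\<dots> \<le> (1 + \<delta>) * dist z 0"
    using \<psi>_lipschitz z(1) assms(1) closure_subset by blast
  also have "\<dots> \<le> 2 * 1" using \<open>norm z \<le> 1\<close> \<delta>_le_1 \<delta>_pos by (intro mult_mono) auto
  finally show False by simp
qed

lemma centre_notin_image_over:
  assumes "0 \<notin> \<Omega>" and small: "24 * \<delta> < \<rho>"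
  shows "centre \<notin> \<psi> ` \<Omega>"
proof
  assume "centre \<in> \<psi> ` \<Omega>"
  then obtain z where z: "z \<in> \<Omega>" "\<psi> z = centre" by (metis imageE)
  note b = base_over[OF assms(1)] and \<Omega> = \<Omega>_eq_over_graph[OF assms(1)] closure_\<Omega>_over[OF assms(1)]
    and dim = dim_ge_2_over[OF assms(1)]
  have bc: "base \<in> closure \<Omega>" and zc: "z \<in> closure \<Omega>"
    using b z(1) closure_\<Omega> by auto
  have nb: "norm base \<le> 1" "\<rho> \<le> norm base" using norm_Gamma_bounds[OF b] by auto
  have "norm (z - base) \<le> (1 + \<delta>) * dist (\<psi> z) (\<psi> base)"
    using \<psi>_inverse_lipschitz[OF zc bc] by (simp add: dist_norm)
  also have "dist (\<psi> z) (\<psi> base) = norm base" using z by (simp add: centre_def disp_def dist_norm)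
  also have "(1 + \<delta>) * norm base \<le> 2 * 1" using nb \<delta>_le_1 \<delta>_pos by (intro mult_mono) auto
  finally have "norm z \<le> 3" using norm_triangle_ineq2[of z base] nb by simp
  moreover have zo: "z \<in> over_graph_cl" using z(1) \<Omega> closure_subset by blast
  ultimately have "norm (disp z - disp base) \<le> 24 * \<delta>"
    using b Gamma_subset_over_graph_cl nb by (intro disp_bounded_over[OF \<Omega>(2) dim]) auto
  moreover have "disp z - disp base = - z" using z by (simp add: centre_def disp_def)
  moreover have "\<rho> \<le> norm z" using zo r_sgn_ge_rho[of z] by (auto simp: over_graph_cl_def)
  ultimately show False using small by simp
qed

text \<open>Outside, \<open>\<psi>(\<Omega>)\<close> is unbounded with bounded frontier, so it contains the exterior of a ball.\<close>

lemma exterior_subset_image_over: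
  assumes "0 \<notin> \<Omega>"
  obtains M where "- cball 0 M \<subseteq> \<psi> ` \<Omega>"
proof -
  note b = base_over[OF assms] and \<Omega> = \<Omega>_eq_over_graph[OF assms] and dim = dim_ge_2_over[OF assms]
  have bc: "base \<in> closure \<Omega>" using b closure_\<Omega> by auto
  have "compact (\<psi> ` \<Gamma>)"
    using compact_Gamma closure_\<Omega> by (intro compact_continuous_image continuous_on_subset[OF continuous_on_\<psi>]) auto
  then obtain M where M: "M > 0" "\<forall>y\<in>\<psi> ` \<Gamma>. norm y \<le> M"
    using compact_imp_bounded bounded_pos by metis
  then have frontier: "frontier (\<psi> ` \<Omega>) \<subseteq> cball 0 M" by (auto simp: frontier_\<psi>_image)
  define T where "T = 2 * (M + norm (\<psi> base)) + 2"
  define z where "z = (T / norm base) *\<^sub>R base"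
  have b0: "base \<noteq> 0" "norm base \<le> 1" using b norm_Gamma_bounds[OF b] by (auto simp: mem_Gamma_iff)
  have T: "T \<ge> 2" using M by (simp add: T_def)
  have nz: "norm z = T" using b0 T by (simp add: z_def)
  have "sgn z = sgn base" using b0 T by (simp add: z_def sgn_scaleR)
  then have "z \<in> over_graph" using nz b0 r_sgn_le_1[of base] T by (auto simp: over_graph_def)
  then have z: "z \<in> \<Omega>" using \<Omega> by blast
  then have "T - 1 \<le> (1 + \<delta>) * dist (\<psi> z) (\<psi> base)"
    using \<psi>_inverse_lipschitz[OF _ bc, of z] closure_subset norm_triangle_ineq2[of z base] nz b0
    by (force simp: dist_norm)
  also have "\<dots> \<le> 2 * dist (\<psi> z) (\<psi> base)" using \<delta>_le_1 by (intro mult_right_mono) auto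
  finally have "M < norm (\<psi> z)"
    using norm_triangle_ineq2[of "\<psi> z - \<psi> base" "- \<psi> base"] M(1) by (simp add: T_def dist_norm)
  then have "\<psi> z \<in> - cball 0 M \<inter> \<psi> ` \<Omega>" using z by auto
  moreover have "connected (- cball (0::'a) M)"
    by (rule connected_complement_bounded_convex) (auto simp: dim)
  ultimately have "- cball 0 M \<subseteq> \<psi> ` \<Omega>"
    using connected_Int_frontier[of "- cball 0 M" "\<psi> ` \<Omega>"] frontier by blast
  then show ?thesis by (rule that)
qed

lemma ray_meets_image_frontier:
  assumes w: "norm \<omega> = 1" and small: "24 * \<delta> < \<rho>"
  shows "\<exists>x\<in>\<Gamma>. \<exists>t\<ge>0. \<psi> x = centre + t *\<^sub>R \<omega>"
proof -
  define R where "R = (\<lambda>t. centre + t *\<^sub>R \<omega>) ` {0..}"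
  have ray: "centre + t *\<^sub>R \<omega> \<in> R" if "t \<ge> 0" for t
    unfolding R_def using that by (intro image_eqI[of _ _ t]) auto
  have "connected R" unfolding R_def
    by (intro connected_continuous_image continuous_intros) (auto intro: convex_connected)
  obtain a b where ab: "a \<in> R" "a \<in> \<psi> ` \<Omega>" "b \<in> R" "b \<notin> \<psi> ` \<Omega>"
  proof (cases "0 \<in> \<Omega>")
    case True
    have "centre = \<psi> 0" using base_under[OF True] by (simp add: centre_def disp_def)
    then have "centre \<in> \<psi> ` \<Omega>" using True by simp
    then show thesis using that ray[of 0] ray[of 3] ray_exits_image_under[OF True w] by simp
  next
    case False
    obtain M where M: "- cball 0 M \<subseteq> \<psi> ` \<Omega>" using exterior_subset_image_over[OF False] .
    define t where "t = norm centre + \<bar>M\<bar> + 1"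
    have "M < norm (centre + t *\<^sub>R \<omega>)"
      using norm_triangle_ineq2[of "t *\<^sub>R \<omega>" "- centre"] w by (simp add: t_def add.commute)
    then have "centre + t *\<^sub>R \<omega> \<in> \<psi> ` \<Omega>" using M by (auto simp del: scaleR_scaleR)
    then show thesis
      using that ray[of t] ray[of 0] centre_notin_image_over[OF False small] by (simp add: t_def)
  qed
  then have "R \<inter> frontier (\<psi> ` \<Omega>) \<noteq> {}"
    using connected_Int_frontier[OF \<open>connected R\<close>, of "\<psi> ` \<Omega>"] by blast
  then obtain t x where "t \<ge> 0" "x \<in> \<Gamma>" "centre + t *\<^sub>R \<omega> = \<psi> x"
    unfolding R_def frontier_\<psi>_image by blast
  then show ?thesis by (intro bexI[of _ x] exI[of _ t]) auto
qed

end

section \<open>The image is bounded by a radial graph\<close>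

text \<open>The threshold is what makes the estimates of \<open>smallness\<close> follow from \<open>K \<le> 106 / \<rho>\<^sup>3\<close>.\<close>

locale near_identity_small = near_identity +
  assumes \<delta>_small: "\<delta> \<le> \<rho>^5 / 2000"
begin

lemma smallness:
  shows small_disp: "24 * \<delta> \<le> \<rho>/2"
    and small_lipschitz: "K * \<delta> \<le> 1"
    and small_transversal: "K * \<delta> + 4 * (24 * \<delta>) / \<rho> \<le> \<rho> / (8 * (L + 1))"
proof -
  have \<rho>4: "\<rho>^4 \<le> 1" "\<rho>^2 \<le> 1" using rho_pos rho_le_1 by (simp_all add: power_le_one)
  have "\<rho>^5 \<le> \<rho>" using mult_left_mono[OF \<rho>4(1), of \<rho>] rho_pos by (simp add: power_Suc[symmetric])
  then show "24 * \<delta> \<le> \<rho>/2" using \<delta>_small \<delta>_pos by linarith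
  have "K * \<delta> \<le> 106 / \<rho>^3 * (\<rho>^5 / 2000)"
    using K_le \<delta>_small \<delta>_pos rho_pos by (intro mult_mono) auto
  also have "\<dots> = 53 / 1000 * \<rho>^2" using rho_pos by (simp add: power_eq_if)
  finally have K\<delta>: "K * \<delta> \<le> 53 / 1000 * \<rho>^2" .
  then show "K * \<delta> \<le> 1" using \<rho>4 by simp
  have "4 * (24 * \<delta>) / \<rho> \<le> 96 * (\<rho>^5 / 2000) / \<rho>"
    using \<delta>_small rho_pos by (intro divide_right_mono) auto
  also have "\<dots> = 6 / 125 * \<rho>^4" using rho_pos by (simp add: power_eq_if)
  also have "\<dots> \<le> 6 / 125 * \<rho>^2"
    using rho_pos rho_le_1 by (intro mult_left_mono power_decreasing) auto
  finally have "4 * (24 * \<delta>) / \<rho> \<le> 6 / 125 * \<rho>^2" .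
  with K\<delta> zero_le_power2[of \<rho>] have "K * \<delta> + 4 * (24 * \<delta>) / \<rho> \<le> \<rho>^2 / 8" by linarith
  also have "\<rho>^2 / 8 = \<rho> / (8 * (L + 1))" using L_nonneg by (simp add: \<rho>_def power2_eq_square)
  finally show "K * \<delta> + 4 * (24 * \<delta>) / \<rho> \<le> \<rho> / (8 * (L + 1))" .
qed

definition "\<epsilon> = 24 * \<delta>"
definition "F x = \<psi> x - centre"

lemma \<epsilon>_bounds: "0 < \<epsilon>" "\<epsilon> \<le> \<rho>/2" "\<epsilon> \<le> 1/2"
  using small_disp \<delta>_pos rho_le_1 by (auto simp: \<epsilon>_def)

lemma F_eq: "F x = x + rel_disp x"
  by (simp add: F_def \<psi>_minus_centre)

lemma norm_F_bounds: "x \<in> \<Gamma> \<Longrightarrow> \<rho>/2 \<le> norm (F x) \<and> norm (F x) \<le> 1 + \<epsilon>"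
  using norm_triangle_ineq2[of x "- rel_disp x"] norm_triangle_ineq[of x "rel_disp x"]
    rel_disp_bound[of x] norm_Gamma_bounds[of x] \<epsilon>_bounds
  by (simp add: F_eq \<epsilon>_def)

lemma F_nonzero: "x \<in> \<Gamma> \<Longrightarrow> F x \<noteq> 0"
  using norm_F_bounds[of x] rho_pos by auto

lemma F_lipschitz: "x \<in> \<Gamma> \<Longrightarrow> y \<in> \<Gamma> \<Longrightarrow> norm (F x - F y) \<le> 2 * norm (x - y)"
proof -
  assume x: "x \<in> \<Gamma>" and y: "y \<in> \<Gamma>"
  have "F x - F y = (x - y) + (rel_disp x - rel_disp y)" by (simp add: F_eq)
  then have "norm (F x - F y) \<le> norm (x - y) + norm (rel_disp x - rel_disp y)" by (metis norm_triangle_ineq)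
  also have "norm (rel_disp x - rel_disp y) \<le> K * \<delta> * norm (x - y)" by (rule rel_disp_lipschitz[OF x y])
  also have "K * \<delta> * norm (x - y) \<le> 1 * norm (x - y)" using small_lipschitz by (intro mult_right_mono) auto
  finally show ?thesis by simp
qed

text \<open>\<open>F\<close> is a small Lipschitz perturbation of the identity on \<open>\<Gamma>\<close>, and \<open>\<Gamma>\<close> is transversal
  to rays, so the direction of \<open>F x\<close> separates points of \<open>\<Gamma>\<close>.\<close>

lemma sgn_F_separates:
  assumes x: "x \<in> \<Gamma>" and y: "y \<in> \<Gamma>"
  shows "\<rho> / (16 * (L + 1)) * norm (x - y) \<le> norm (sgn (F x) - sgn (F y))"
proof -
  define u where "u = F x"
  define v where "v = F y"
  define D where "D = norm (x - y)"
  define A where "A = \<rho> / (4 * (L + 1))"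
  define \<tau> where "\<tau> = norm u / norm v"
  have D0: "D \<ge> 0" by (simp add: D_def)
  have bu: "\<rho>/2 \<le> norm u" "norm u \<le> 1 + \<epsilon>" using norm_F_bounds[OF x] by (auto simp: u_def)
  have bv: "\<rho>/2 \<le> norm v" using norm_F_bounds[OF y] by (auto simp: v_def)
  have nu0: "norm u > 0" and nv0: "norm v > 0" using bu bv rho_pos by auto
  have tau0: "\<tau> \<ge> 0" by (simp add: \<tau>_def)
  have split: "x - \<tau> *\<^sub>R y = (u - \<tau> *\<^sub>R v) - (rel_disp x - rel_disp y) - (1 - \<tau>) *\<^sub>R rel_disp y"
    by (simp add: u_def v_def F_eq algebra_simps)
  have t1: "A * D \<le> norm (x - \<tau> *\<^sub>R y)"
    unfolding A_def D_def by (rule Gamma_ray_distance_chord[OF x y tau0])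
  have t2: "norm (rel_disp x - rel_disp y) \<le> (K * \<delta>) * D" using rel_disp_lipschitz[OF x y] by (simp add: D_def)
  have "\<bar>1 - \<tau>\<bar> \<le> norm (u - v) / norm v" using abs_1_minus_norm_ratio_le nv0 by (simp add: \<tau>_def)
  also have "\<dots> \<le> (2 * D) / (\<rho>/2)"
    using F_lipschitz[OF x y] bv rho_pos D0 by (intro frac_le) (auto simp: u_def v_def D_def)
  finally have "\<bar>1 - \<tau>\<bar> \<le> 4 / \<rho> * D" by (simp add: field_simps)
  then have "\<bar>1 - \<tau>\<bar> * norm (rel_disp y) \<le> (4 / \<rho> * D) * \<epsilon>"
    using rel_disp_bound[OF y] rho_pos D0 by (intro mult_mono) (auto simp: \<epsilon>_def)
  then have t3: "norm ((1 - \<tau>) *\<^sub>R rel_disp y) \<le> (4 * \<epsilon> / \<rho>) * D" by (simp add: ac_simps)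
  have lower: "A * D - (K * \<delta>) * D - (4 * \<epsilon> / \<rho>) * D \<le> norm (u - \<tau> *\<^sub>R v)"
    using t1 t2 t3 split norm_triangle_ineq4[of "(u - \<tau> *\<^sub>R v) - (rel_disp x - rel_disp y)" "(1 - \<tau>) *\<^sub>R rel_disp y"]
      norm_triangle_ineq4[of "u - \<tau> *\<^sub>R v" "rel_disp x - rel_disp y"] by simp
  have "A / 2 \<le> A - K * \<delta> - 4 * \<epsilon> / \<rho>"
  proof -
    have "A / 2 = \<rho> / (8 * (L + 1))" by (simp add: A_def)
    with small_transversal show ?thesis unfolding \<epsilon>_def by linarith
  qed
  then have "(A / 2) * D \<le> (A - K * \<delta> - 4 * \<epsilon> / \<rho>) * D" using D0 by (rule mult_right_mono)
  also have "\<dots> = A * D - (K * \<delta>) * D - (4 * \<epsilon> / \<rho>) * D" by (simp add: algebra_simps)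
  finally have lb: "(A / 2) * D \<le> norm (u - \<tau> *\<^sub>R v)" using lower by linarith
  have "((A / 2) * D) / 2 \<le> norm (u - \<tau> *\<^sub>R v) / norm u"
    by (rule frac_le) (use lb nu0 bu \<epsilon>_bounds in auto)
  also have "\<dots> = norm (sgn u - sgn v)" using sgn_diff_eq[of u v] nu0 nv0 by (simp add: \<tau>_def)
  finally show ?thesis by (simp add: A_def D_def u_def v_def field_simps)
qed


definition "point_in_dir \<omega> = (SOME x. x \<in> \<Gamma> \<and> sgn (F x) = \<omega>)"
definition "r_image \<omega> = norm (F (point_in_dir \<omega>)) / (1 + \<epsilon>)"

lemma point_in_dir:
  assumes w: "norm \<omega> = 1"
  shows "point_in_dir \<omega> \<in> \<Gamma> \<and> sgn (F (point_in_dir \<omega>)) = \<omega>"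
proof -
  have "24 * \<delta> < \<rho>" using small_disp rho_pos by linarith
  then obtain x t where x: "x \<in> \<Gamma>" "t \<ge> 0" "\<psi> x = centre + t *\<^sub>R \<omega>"
    using ray_meets_image_frontier[OF w] by blast
  have Fx: "F x = t *\<^sub>R \<omega>" using x(3) by (simp add: F_def)
  then have "t \<noteq> 0" using F_nonzero[OF x(1)] by auto
  then have "sgn (F x) = \<omega>" using Fx x(2) w by (simp add: sgn_scaleR sgn_div_norm)
  then have "\<exists>x. x \<in> \<Gamma> \<and> sgn (F x) = \<omega>" using x(1) by blast
  then show ?thesis unfolding point_in_dir_def by (rule someI_ex)
qed

lemma point_in_dir_sgn_F: "x \<in> \<Gamma> \<Longrightarrow> point_in_dir (sgn (F x)) = x"
proof -
  assume x: "x \<in> \<Gamma>"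
  then have "norm (sgn (F x)) = 1" using F_nonzero by (simp add: norm_sgn)
  then have X: "point_in_dir (sgn (F x)) \<in> \<Gamma>" "sgn (F (point_in_dir (sgn (F x)))) = sgn (F x)"
    using point_in_dir by auto
  define a where "a = \<rho> / (16 * (L + 1))"
  have "a * norm (point_in_dir (sgn (F x)) - x) \<le> 0"
    using sgn_F_separates[OF X(1) x] X(2) unfolding a_def by simp
  moreover have "a > 0" using rho_pos L_nonneg by (simp add: a_def)
  ultimately have "norm (point_in_dir (sgn (F x)) - x) \<le> 0" by (simp add: mult_le_0_iff)
  then show ?thesis by simp
qed

lemma r_image_sgn_F: "x \<in> \<Gamma> \<Longrightarrow> r_image (sgn (F x)) = norm (F x) / (1 + \<epsilon>)"
  by (simp add: r_image_def point_in_dir_sgn_F)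

lemma r_image_bounds:
  assumes w: "norm \<omega> = 1"
  shows "1 / (1 + 32 * (L + 1)^2) \<le> r_image \<omega> \<and> r_image \<omega> \<le> 1"
proof -
  have b: "\<rho>/2 \<le> norm (F (point_in_dir \<omega>))" "norm (F (point_in_dir \<omega>)) \<le> 1 + \<epsilon>"
    using norm_F_bounds point_in_dir[OF w] by auto
  have "3 * (L + 1) \<le> 32 * (L + 1) * (L + 1)" using L_nonneg by (intro mult_right_mono) auto
  moreover have "32 * (L + 1)^2 = 32 * (L + 1) * (L + 1)" by (simp add: power2_eq_square)
  ultimately have "3 * (L + 1) \<le> 1 + 32 * (L + 1)^2" by linarith
  then have "1 / (1 + 32 * (L + 1)^2) \<le> 1 / (3 * (L + 1))"
    using L_nonneg by (intro divide_left_mono mult_pos_pos) auto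
  also have "\<dots> = \<rho>/3" by (simp add: \<rho>_def)
  also have "\<rho>/3 = (\<rho>/2) / (3/2)" by simp
  also have "\<dots> \<le> norm (F (point_in_dir \<omega>)) / (1 + \<epsilon>)"
    using b \<epsilon>_bounds rho_pos by (intro frac_le) auto
  finally have "1 / (1 + 32 * (L + 1)^2) \<le> r_image \<omega>" by (simp add: r_image_def)
  moreover have "r_image \<omega> \<le> 1" using b \<epsilon>_bounds by (simp add: r_image_def)
  ultimately show ?thesis ..
qed

lemma r_image_lipschitz:
  assumes w1: "norm \<omega>1 = 1" and w2: "norm \<omega>2 = 1"
  shows "\<bar>r_image \<omega>1 - r_image \<omega>2\<bar> \<le> 32 * (L + 1)^2 * norm (\<omega>1 - \<omega>2)"
proof -
  define x1 where "x1 = point_in_dir \<omega>1"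
  define x2 where "x2 = point_in_dir \<omega>2"
  have X: "x1 \<in> \<Gamma>" "sgn (F x1) = \<omega>1" "x2 \<in> \<Gamma>" "sgn (F x2) = \<omega>2"
    using point_in_dir[OF w1] point_in_dir[OF w2] by (auto simp: x1_def x2_def)
  have "\<bar>r_image \<omega>1 - r_image \<omega>2\<bar> = \<bar>norm (F x1) - norm (F x2)\<bar> / (1 + \<epsilon>)"
    using \<epsilon>_bounds by (simp add: r_image_def x1_def x2_def diff_divide_distrib[symmetric] abs_div)
  also have "\<dots> \<le> \<bar>norm (F x1) - norm (F x2)\<bar> / 1"
    using \<epsilon>_bounds by (intro divide_left_mono) auto
  also have "\<dots> = \<bar>norm (F x1) - norm (F x2)\<bar>" by simp
  also have "\<dots> \<le> norm (F x1 - F x2)" by (rule norm_triangle_ineq3)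
  also have "\<dots> \<le> 2 * norm (x1 - x2)" by (rule F_lipschitz[OF X(1,3)])
  also have "\<dots> \<le> 2 * (16 * (L + 1) / \<rho> * norm (\<omega>1 - \<omega>2))"
  proof -
    define a where "a = \<rho> / (16 * (L + 1))"
    have a: "a > 0" using rho_pos L_nonneg by (simp add: a_def)
    have "a * norm (x1 - x2) \<le> norm (\<omega>1 - \<omega>2)" using sgn_F_separates[OF X(1,3)] X by (simp add: a_def)
    then have "norm (x1 - x2) \<le> (1 / a) * norm (\<omega>1 - \<omega>2)" using a by (simp add: field_simps)
    then show ?thesis by (simp add: a_def)
  qed
  also have "\<dots> = 32 * (L + 1)^2 * norm (\<omega>1 - \<omega>2)"
    using L_nonneg by (simp add: \<rho>_def power2_eq_square algebra_simps)
  finally show ?thesis .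
qed

lemma frontier_image_normalized:
  "frontier ((\<lambda>w. (1 / (1 + \<epsilon>)) *\<^sub>R (w - centre)) ` \<psi> ` \<Omega>) = (\<lambda>\<theta>. r_image \<theta> *\<^sub>R \<theta>) ` sphere 0 1"
proof -
  define h where "h w = (1 / (1 + \<epsilon>)) *\<^sub>R (w - centre)" for w
  have h_F: "h (\<psi> x) = r_image (sgn (F x)) *\<^sub>R sgn (F x)" if "x \<in> \<Gamma>" for x
  proof -
    have "h (\<psi> x) = (1 / (1 + \<epsilon>)) *\<^sub>R (norm (F x) *\<^sub>R sgn (F x))"
      using F_nonzero[OF that] by (simp add: h_def F_def sgn_div_norm)
    also have "\<dots> = r_image (sgn (F x)) *\<^sub>R sgn (F x)" by (simp add: r_image_sgn_F[OF that])
    finally show ?thesis .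
  qed
  have "frontier (h ` \<psi> ` \<Omega>) = h ` frontier (\<psi> ` \<Omega>)"
    using \<epsilon>_bounds
    by (intro frontier_image_bicontinuous[where k="\<lambda>y. (1 + \<epsilon>) *\<^sub>R y + centre"])
       (auto simp: h_def intro!: continuous_intros)
  also have "\<dots> = (\<lambda>\<theta>. r_image \<theta> *\<^sub>R \<theta>) ` sphere 0 1"
  proof
    show "h ` frontier (\<psi> ` \<Omega>) \<subseteq> (\<lambda>\<theta>. r_image \<theta> *\<^sub>R \<theta>) ` sphere 0 1"
      using h_F F_nonzero by (auto simp: frontier_\<psi>_image norm_sgn)
    show "(\<lambda>\<theta>. r_image \<theta> *\<^sub>R \<theta>) ` sphere 0 1 \<subseteq> h ` frontier (\<psi> ` \<Omega>)"
    proof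
      fix y assume "y \<in> (\<lambda>\<theta>. r_image \<theta> *\<^sub>R \<theta>) ` sphere 0 1"
      then obtain \<omega> where "norm \<omega> = 1" "y = r_image \<omega> *\<^sub>R \<omega>" by auto
      then have "point_in_dir \<omega> \<in> \<Gamma>" "y = h (\<psi> (point_in_dir \<omega>))"
        using point_in_dir h_F by auto
      then show "y \<in> h ` frontier (\<psi> ` \<Omega>)" by (auto simp: frontier_\<psi>_image)
    qed
  qed
  finally show ?thesis by (simp add: h_def)
qed

end

section \<open>Similarities\<close>

locale similarity =
  fixes c :: real and R :: "'a::euclidean_space \<Rightarrow> 'a" and b :: 'a
  assumes c_pos: "0 < c" and orthogonal_R: "orthogonal_transformation R"
begin

definition "sim x = c *\<^sub>R R x + b"
definition "sim_inv y = inv R ((1/c) *\<^sub>R (y - b))"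

lemma linear_R: "linear R" and linear_inv_R: "linear (inv R)"
  and norm_R: "norm (R x) = norm x"
  and R_inv_R: "R (inv R y) = y" and inv_R_R: "inv R (R x) = x"
proof -
  have inv: "orthogonal_transformation (inv R)" and bij: "bij R"
    using orthogonal_transformation_inv orthogonal_transformation_bij orthogonal_R by blast+
  show "linear R" "linear (inv R)"
    using orthogonal_R inv by (simp_all add: orthogonal_transformation_linear)
  show "norm (R x) = norm x"
    using orthogonal_R by (simp add: orthogonal_transformation_norm)
  show "R (inv R y) = y" "inv R (R x) = x"
    using bij by (simp_all add: bij_is_surj surj_f_inv_f bij_is_inj inv_f_f)
qed

lemma sim_inv_sim: "sim_inv (sim x) = x" and sim_sim_inv: "sim (sim_inv y) = y"
  using c_pos by (simp_all add: sim_def sim_inv_def inv_R_R R_inv_R)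

lemma dist_sim: "dist (sim x) (sim y) = c * dist x y"
proof -
  have "sim x - sim y = c *\<^sub>R R (x - y)" by (simp add: sim_def linear_diff[OF linear_R] algebra_simps)
  then show ?thesis using c_pos by (simp add: dist_norm norm_R)
qed

lemma continuous_on_sim: "continuous_on UNIV sim"
  unfolding sim_def using linear_R
  by (intro continuous_intros linear_continuous_on) (simp only: linear_conv_bounded_linear)

lemma continuous_on_sim_inv: "continuous_on UNIV sim_inv"
  unfolding sim_inv_def using linear_inv_R
  by (intro continuous_on_compose2[OF linear_continuous_on, of "inv R"])
     (auto simp only: linear_conv_bounded_linear intro!: continuous_intros)

lemmas sim_bicontinuous = continuous_on_sim continuous_on_sim_inv sim_inv_sim sim_sim_inv

lemma closure_sim_image: "closure (sim ` S) = sim ` closure S"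
  by (rule closure_image_bicontinuous[OF sim_bicontinuous])

lemma bi_lipschitz_on_conjugate:
  assumes "bi_lipschitz_on K S \<phi>"
  shows "bi_lipschitz_on K (sim ` S) (\<lambda>y. sim (\<phi> (sim_inv y)))"
  unfolding bi_lipschitz_on_def
proof (intro ballI)
  fix x y assume "x \<in> sim ` S" "y \<in> sim ` S"
  then obtain x' y' where "x' \<in> S" "y' \<in> S" and xy: "x = sim x'" "y = sim y'" by blast
  then have "dist x' y' / K \<le> dist (\<phi> x') (\<phi> y')" "dist (\<phi> x') (\<phi> y') \<le> K * dist x' y'"
    using assms by (auto simp: bi_lipschitz_on_def)
  from this[THEN mult_left_mono, OF less_imp_le[OF c_pos]]
  show "dist x y / K \<le> dist (sim (\<phi> (sim_inv x))) (sim (\<phi> (sim_inv y))) \<and>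
        dist (sim (\<phi> (sim_inv x))) (sim (\<phi> (sim_inv y))) \<le> K * dist x y"
    by (simp add: xy sim_inv_sim dist_sim mult.left_commute)
qed

lemma has_derivative_conjugate:
  assumes "z \<in> sim ` S" and "(\<phi> has_derivative f) (at (sim_inv z) within S)"
  shows "((\<lambda>y. sim (\<phi> (sim_inv y))) has_derivative (\<lambda>h. c *\<^sub>R R (f (inv R ((1/c) *\<^sub>R h)))))
           (at z within sim ` S)"
proof -
  have bR: "bounded_linear R" and bRi: "bounded_linear (inv R)"
    using linear_R linear_inv_R by (simp_all add: linear_conv_bounded_linear)
  have inner: "(sim_inv has_derivative (\<lambda>h. inv R ((1/c) *\<^sub>R h))) (at z within sim ` S)"
    unfolding sim_inv_def[abs_def]
    by (rule bounded_linear.has_derivative[OF bRi]) (auto intro!: derivative_eq_intros)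
  have "sim_inv ` sim ` S = S" by (simp add: image_image sim_inv_sim)
  then have "(\<phi> has_derivative f) (at (sim_inv z) within sim_inv ` sim ` S)" using assms(2) by simp
  with inner have "((\<lambda>y. \<phi> (sim_inv y)) has_derivative (\<lambda>h. f (inv R ((1/c) *\<^sub>R h)))) (at z within sim ` S)"
    by (rule has_derivative_in_compose)
  then show ?thesis unfolding sim_def
    by (intro has_derivative_add_const has_derivative_scaleR_right bounded_linear.has_derivative[OF bR])
qed

lemma conjugate_derivative_near_id:
  assumes "norm (T - id_blinfun) \<le> \<delta>"
  shows "norm (c *\<^sub>R R (blinfun_apply T (inv R ((1/c) *\<^sub>R h))) - h) \<le> \<delta> * norm h"
proof -
  define k where "k = inv R ((1/c) *\<^sub>R h)"
  have h: "h = c *\<^sub>R R k" using c_pos by (simp add: k_def R_inv_R)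
  have "c *\<^sub>R R (blinfun_apply T k) - h = c *\<^sub>R R (blinfun_apply T k - k)"
    by (simp add: h linear_diff[OF linear_R] algebra_simps)
  then have "norm (c *\<^sub>R R (blinfun_apply T k) - h) = c * norm (blinfun_apply T k - k)"
    using c_pos by (simp add: norm_R)
  also have "\<dots> \<le> c * (\<delta> * norm k)"
    using norm_blinfun_diff_id_le[OF assms] c_pos by (intro mult_left_mono) auto
  also have "\<dots> = \<delta> * norm h" using c_pos by (simp add: h norm_R)
  finally show ?thesis by (simp add: k_def)
qed

end

lemma (in similarity) near_identity_small_conjugate:
  assumes "radial_graph r L" "open \<Omega>" "connected \<Omega>" "frontier (sim ` \<Omega>) = radial_graph.\<Gamma> r"
    and \<delta>: "0 < \<delta>" "\<delta> \<le> 1" "\<delta> \<le> (1 / (1 + L))^5 / 2000"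
    and bi: "bi_lipschitz_on (1 + \<delta>) (closure \<Omega>) \<phi>"
    and der: "\<And>z. z \<in> closure \<Omega> \<Longrightarrow> (\<phi> has_derivative blinfun_apply (D z)) (at z within closure \<Omega>)"
    and near: "\<And>z. z \<in> closure \<Omega> \<Longrightarrow> norm (D z - id_blinfun) \<le> \<delta>"
  shows "near_identity_small r L (sim ` \<Omega>) (\<lambda>y. sim (\<phi> (sim_inv y))) \<delta>
           (\<lambda>z h. c *\<^sub>R R (blinfun_apply (D (sim_inv z)) (inv R ((1/c) *\<^sub>R h))))"
proof -
  interpret radial_graph r L by (rule assms(1))
  have sim_inv_closure: "sim_inv z \<in> closure \<Omega>" if "z \<in> closure (sim ` \<Omega>)" for z
    using that by (auto simp: closure_sim_image sim_inv_sim)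
  show ?thesis
  proof unfold_locales
    show "open (sim ` \<Omega>)" by (rule open_image_bicontinuous[OF sim_bicontinuous assms(2)])
    show "connected (sim ` \<Omega>)"
      by (rule connected_continuous_image[OF continuous_on_subset[OF continuous_on_sim] assms(3)]) simp
    show "bi_lipschitz_on (1 + \<delta>) (closure (sim ` \<Omega>)) (\<lambda>y. sim (\<phi> (sim_inv y)))"
      unfolding closure_sim_image by (rule bi_lipschitz_on_conjugate[OF bi])
    fix z assume z: "z \<in> closure (sim ` \<Omega>)"
    show "((\<lambda>y. sim (\<phi> (sim_inv y))) has_derivative
           (\<lambda>h. c *\<^sub>R R (blinfun_apply (D (sim_inv z)) (inv R ((1/c) *\<^sub>R h))))) (at z within closure (sim ` \<Omega>))"
      using z der[OF sim_inv_closure[OF z]] unfolding closure_sim_image by (rule has_derivative_conjugate)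
    show "norm (c *\<^sub>R R (blinfun_apply (D (sim_inv z)) (inv R ((1/c) *\<^sub>R h))) - h) \<le> \<delta> * norm h" for h
      using near[OF sim_inv_closure[OF z]] by (rule conjugate_derivative_near_id)
  qed (use assms(4) \<delta> in \<open>simp_all add: \<rho>_def\<close>)
qed

section \<open>Lipschitz graph domains\<close>

lemma transl_dil_rot_similarity:
  assumes "transl_dil_rot A"
  obtains c R b where "similarity c R" "rotation R" "A = similarity.sim c R b"
proof -
  obtain b c R where "c > 0" "rotation R" "A = (\<lambda>x. x + b) \<circ> (\<lambda>x. c *\<^sub>R x) \<circ> R"
    using assms unfolding transl_dil_rot_def by blast
  moreover from this have "similarity c R" by unfold_locales (simp_all add: rotation_def)
  ultimately show ?thesis using that[of c R b] by (simp add: fun_eq_iff similarity.sim_def)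
qed

lemma transl_dil_rot_rescale:
  assumes "similarity c R" "rotation R" "0 < s"
  shows "transl_dil_rot (\<lambda>x. s *\<^sub>R (similarity.sim c R b x - q))"
  unfolding transl_dil_rot_def
proof (intro exI conjI)
  show "0 < s * c" using assms by (simp add: similarity_def)
  show "(\<lambda>x. s *\<^sub>R (similarity.sim c R b x - q)) = (\<lambda>x. x + s *\<^sub>R (b - q)) \<circ> (\<lambda>x. (s * c) *\<^sub>R x) \<circ> R"
    using assms(1) by (auto simp: similarity.sim_def algebra_simps)
qed (use assms in auto)

lemma lipschitz_graph_domain_nonneg:
  assumes "lipschitz_graph_domain M (\<Omega> :: (real^'n) set)"
  shows "0 \<le> M"
proof -
  from assms obtain r :: "real^'n \<Rightarrow> real" where r: "\<forall>\<theta>\<in>sphere 0 1. \<forall>\<psi>\<in>sphere 0 1. \<bar>r \<theta> - r \<psi>\<bar> \<le> M * norm (\<theta> - \<psi>)"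
    unfolding lipschitz_graph_domain_def by blast
  obtain e :: "real^'n" where "e \<in> Basis" using nonempty_Basis by blast
  then have "e \<in> sphere 0 1" "-e \<in> sphere 0 1" "norm (e - -e) = 2"
    by (auto simp: norm_minus_cancel simp flip: scaleR_2)
  then have "\<bar>r e - r (-e)\<bar> \<le> M * 2" using r by metis
  then show ?thesis using abs_ge_zero[of "r e - r (-e)"] by linarith
qed

lemma lipschitz_graph_domain_near_identity_image:
  fixes \<Omega> :: "(real^'n) set" and \<phi> :: "real^'n \<Rightarrow> real^'n"
  assumes lgd: "lipschitz_graph_domain L \<Omega>"
    and \<delta>: "0 < \<delta>" "\<delta> \<le> 1" "\<delta> \<le> (1 / (1 + L))^5 / 2000"
    and bi: "bi_lipschitz_on (1 + \<delta>) (closure \<Omega>) \<phi>"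
    and der: "\<And>z. z \<in> closure \<Omega> \<Longrightarrow> (\<phi> has_derivative blinfun_apply (D z)) (at z within closure \<Omega>)"
    and near: "\<And>z. z \<in> closure \<Omega> \<Longrightarrow> norm (D z - id_blinfun) \<le> \<delta>"
  shows "lipschitz_graph_domain (32 * (L + 1)^2) (\<phi> ` \<Omega>)"
proof -
  obtain A r where \<Omega>: "open \<Omega>" "connected \<Omega>" and A: "transl_dil_rot A"
    and fr: "frontier (A ` \<Omega>) = (\<lambda>\<theta>. r \<theta> *\<^sub>R \<theta>) ` sphere 0 1"
    and rl: "\<forall>\<theta>\<in>sphere 0 1. \<forall>\<psi>\<in>sphere 0 1. \<bar>r \<theta> - r \<psi>\<bar> \<le> L * norm (\<theta> - \<psi>)"
    and rb: "\<forall>\<theta>\<in>sphere 0 1. 1 / (1 + L) \<le> r \<theta> \<and> r \<theta> \<le> 1"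
    using lgd unfolding lipschitz_graph_domain_def by blast
  obtain c R b where sim: "similarity c R" "rotation R" and A_sim: "A = similarity.sim c R b"
    using transl_dil_rot_similarity[OF A] .
  interpret similarity c R b by (rule sim(1))
  interpret radial_graph r L
    using lipschitz_graph_domain_nonneg[OF lgd] rl rb by unfold_locales auto
  define \<psi> where "\<psi> y = sim (\<phi> (sim_inv y))" for y
  define \<psi>' where "\<psi>' z h = c *\<^sub>R R (blinfun_apply (D (sim_inv z)) (inv R ((1/c) *\<^sub>R h)))" for z h
  interpret near_identity_small r L "sim ` \<Omega>" \<psi> \<delta> \<psi>'
    unfolding \<psi>_def[abs_def] \<psi>'_def[abs_def]
    by (rule near_identity_small_conjugate) (use radial_graph_axioms \<Omega> fr \<delta> bi der near in \<open>auto simp: A_sim \<Gamma>_def\<close>)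
  define A' where "A' x = (1 / (1 + \<epsilon>)) *\<^sub>R (sim x - centre)" for x
  have \<phi>_image: "\<phi> ` \<Omega> = sim_inv ` \<psi> ` sim ` \<Omega>" and A'_image: "A' ` \<phi> ` \<Omega> = (\<lambda>w. (1 / (1 + \<epsilon>)) *\<^sub>R (w - centre)) ` \<psi> ` sim ` \<Omega>"
    by (auto simp: \<psi>_def A'_def image_image sim_inv_sim)
  show ?thesis
    unfolding lipschitz_graph_domain_def
  proof (intro conjI exI)
    show "open (\<phi> ` \<Omega>)" unfolding \<phi>_image
      by (rule open_image_bicontinuous[OF continuous_on_sim_inv continuous_on_sim sim_sim_inv sim_inv_sim open_\<psi>_image])
    have "continuous_on (closure \<Omega>) \<phi>"
      using bi \<delta> by (intro lipschitz_on_continuous_on[of "1 + \<delta>"]) (auto simp: lipschitz_on_def bi_lipschitz_on_def)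
    then show "connected (\<phi> ` \<Omega>)" using \<Omega>(2) closure_subset by (metis connected_continuous_image continuous_on_subset)
    show "transl_dil_rot A'" unfolding A'_def using sim \<epsilon>_bounds by (intro transl_dil_rot_rescale) auto
    show "frontier (A' ` \<phi> ` \<Omega>) = (\<lambda>\<theta>. r_image \<theta> *\<^sub>R \<theta>) ` sphere 0 1"
      unfolding A'_image by (rule frontier_image_normalized)
    show "\<forall>\<theta>\<in>sphere 0 1. 1 / (1 + 32 * (L + 1)^2) \<le> r_image \<theta> \<and> r_image \<theta> \<le> 1"
      using r_image_bounds by simp
    then show "\<forall>\<theta>\<in>sphere 0 1. 0 < r_image \<theta>"
      using add_pos_nonneg[of 1 "32 * (L + 1)^2"] by (auto intro: order.strict_trans2[rotated])
    show "\<forall>\<theta>\<in>sphere 0 1. \<forall>\<eta>\<in>sphere 0 1. \<bar>r_image \<theta> - r_image \<eta>\<bar> \<le> 32 * (L + 1)^2 * norm (\<theta> - \<eta>)"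
      using r_image_lipschitz by simp
  qed
qed

theorem lemma5p5:
  fixes L0 :: real
  shows "\<exists>\<delta>0>0. \<exists>L1. \<forall>(\<Omega>::(real^'n) set) \<delta> \<phi> D.
           lipschitz_graph_domain L0 \<Omega> \<and> 0 < \<delta> \<and> \<delta> < \<delta>0 \<and>
           bi_lipschitz_on (1 + \<delta>) (closure \<Omega>) \<phi> \<and>
           (\<forall>z\<in>closure \<Omega>. (\<phi> has_derivative blinfun_apply (D z)) (at z within closure \<Omega>)) \<and>
           continuous_on (closure \<Omega>) D \<and>
           (\<forall>z\<in>closure \<Omega>. norm (D z - id_blinfun) \<le> \<delta>)
           \<longrightarrow> lipschitz_graph_domain L1 (\<phi> ` \<Omega>)"
proof (intro exI conjI allI impI)
  \<comment> \<open>Domains exist only for \<open>L0 \<ge> 0\<close>; the absolute value merely keeps \<open>\<delta>0\<close> positive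
    otherwise.\<close>
  define \<delta>0 where "\<delta>0 = min 1 ((1 / (1 + \<bar>L0\<bar>))^5 / 2000)"
  show "\<delta>0 > 0" by (simp add: \<delta>0_def)
  fix \<Omega> :: "(real^'n) set" and \<delta> \<phi> D
  assume H: "lipschitz_graph_domain L0 \<Omega> \<and> 0 < \<delta> \<and> \<delta> < \<delta>0 \<and>
           bi_lipschitz_on (1 + \<delta>) (closure \<Omega>) \<phi> \<and>
           (\<forall>z\<in>closure \<Omega>. (\<phi> has_derivative blinfun_apply (D z)) (at z within closure \<Omega>)) \<and>
           continuous_on (closure \<Omega>) D \<and> (\<forall>z\<in>closure \<Omega>. norm (D z - id_blinfun) \<le> \<delta>)"
  then have "\<bar>L0\<bar> = L0" using lipschitz_graph_domain_nonneg[of L0 \<Omega>] by simp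
  with H show "lipschitz_graph_domain (32 * (L0 + 1)^2) (\<phi> ` \<Omega>)"
    by (intro lipschitz_graph_domain_near_identity_image[of L0 \<Omega> \<delta>]) (auto simp: \<delta>0_def)
qed

end
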